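(* Let $\eta>0$ and let $m,k,d$ be positive integers. Then there exists a positive integer $n_1=n_1(\eta,m,k,d)$ such that for every integer $n\geq n_1$ and every $k$-integer polynomial $Q\colon\mathbb{F}_2^{\binom{[n]}{\leq 2}}\to\mathbb{Z}_{2^k}$ of degree $d$, there is a collection $\mathcal{V}$ of pairwise disjoint $m$-dimensional block HJ-subspaces of $\mathbb{F}_2^{\binom{[n]}{\leq 2}}$ such that (i) $\mathbb{P}\big[\mathbb{F}_2^{\binom{[n]}{\leq 2}}\setminus\bigcup\mathcal{V}\big]\leq\eta$, and (ii) for every $V\in\mathcal{V}$, $\deg(Q\circ e_V)<\deg(Q)$, where $e_V\colon\mathbb{F}_2^{\binom{[m]}{\leq 2}}\to V$ is the HJ-embedding associated with $V$.
   Context: $\binom{[n]}{\leq 2}$ is the set of nonempty subsets of $[n]$ with at most two elements; $\mathbb{P}$ is the uniform probability measure on $\mathbb{F}_2^{\binom{[n]}{\leq 2}}$; $\mathbb{Z}_{2^k}=\mathbb{Z}/2^k\mathbb{Z}$. Integer polynomial: $Q\colon\mathbb{F}_2^{\binom{[n]}{\leq 2}}\to\mathbb{Z}_{2^k}$ is a $k$-integer polynomial of degree at most $d$ if $Q(x)=\alpha+\sum_{F}\lambda_F\prod_{e\in F}x(e)\bmod 2^k$, summing over nonempty $F\subseteq\binom{[n]}{\leq 2}$ with $|F|\leq d$, with $\alpha,\lambda_F\in\mathbb{Z}_{2^k}$ and $x(e)\in\{0,1\}\subseteq\mathbb{Z}_{2^k}$; its degree is the least such $d$ (so functions of the same form on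 $\mathbb{F}_2^{\binom{[m]}{\leq 2}}$ have degrees defined likewise). HJ-subspaces: let $n\geq m\geq 1$ and $\boldsymbol{I}=(I_1,\dots,I_m)$ pairwise disjoint nonempty subsets of $[n]$ with $\min I_1<\dots<\min I_m$. For $q\in\binom{[m]}{\leq 2}$ let $b_q$ be the indicator of $\{p\in\binom{[n]}{\leq 2}: p\subseteq\bigcup_{i\in q}I_i,\ p\cap I_i\neq\emptyset\ \forall i\in q\}$, and $\mathrm{Id}_{\boldsymbol I}(x)=\sum_q x(q)b_q$ for $x\in\mathbb{F}_2^{\binom{[m]}{\leq 2}}$. An HJ-embedding is $e=\mathrm{Id}_{\boldsymbol I}+c$ with $c\in\mathbb{F}_2^{\binom{[n]}{\leq 2}}$ vanishing on $\binom{I_1\cup\dots\cup I_m}{\leq 2}$; its image $V$ is an HJ-subspace of dimension $m$ with wildcard sets $\boldsymbol I$, and $e_V:=e$. $V$ is block if $\max I_i<\min I_{i+1}$ for all $i<m$. *)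

theory Defs
  imports Complex_Main
begin

definition edges :: "nat \<Rightarrow> nat set set" where
  "edges n = {p. p \<subseteq> {1..n} \<and> p \<noteq> {} \<and> card p \<le> 2}"

text \<open>Points of F_2^(edges n), as boolean functions vanishing outside edges n.\<close>
definition cube :: "nat \<Rightarrow> (nat set \<Rightarrow> bool) set" where
  "cube n = {x. \<forall>p. x p \<longrightarrow> p \<in> edges n}"

text \<open>Q is a k-integer polynomial of degree at most d on cube n (values in Z_(2^k),
  represented by residues mod 2^k).\<close>
definition kpoly_le :: "nat \<Rightarrow> nat \<Rightarrow> nat \<Rightarrow> ((nat set \<Rightarrow> bool) \<Rightarrow> int) \<Rightarrow> bool" where
  "kpoly_le k n d Q \<longleftrightarrow> (\<exists>(\<alpha>::int) (coef::nat set set \<Rightarrow> int). \<forall>x\<in>cube n.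
     Q x = (\<alpha> + (\<Sum>F\<in>{F. F \<subseteq> edges n \<and> F \<noteq> {} \<and> card F \<le> d}.
              coef F * (\<Prod>e\<in>F. if x e then 1 else 0))) mod 2^k)"

definition kpoly :: "nat \<Rightarrow> nat \<Rightarrow> ((nat set \<Rightarrow> bool) \<Rightarrow> int) \<Rightarrow> bool" where
  "kpoly k n Q \<longleftrightarrow> (\<exists>d. kpoly_le k n d Q)"

definition kdeg :: "nat \<Rightarrow> nat \<Rightarrow> ((nat set \<Rightarrow> bool) \<Rightarrow> int) \<Rightarrow> nat" where
  "kdeg k n Q = (LEAST d. kpoly_le k n d Q)"

definition wildcards :: "nat \<Rightarrow> nat \<Rightarrow> (nat \<Rightarrow> nat set) \<Rightarrow> bool" where
  "wildcards n m I \<longleftrightarrow> 1 \<le> m \<and> m \<le> n \<and>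
     (\<forall>i\<in>{1..m}. I i \<noteq> {} \<and> I i \<subseteq> {1..n}) \<and>
     (\<forall>i\<in>{1..m}. \<forall>j\<in>{1..m}. i \<noteq> j \<longrightarrow> I i \<inter> I j = {}) \<and>
     (\<forall>i\<in>{1..<m}. Min (I i) < Min (I (Suc i)))"

definition block :: "nat \<Rightarrow> (nat \<Rightarrow> nat set) \<Rightarrow> bool" where
  "block m I \<longleftrightarrow> (\<forall>i\<in>{1..<m}. Max (I i) < Min (I (Suc i)))"

definition bq :: "nat \<Rightarrow> (nat \<Rightarrow> nat set) \<Rightarrow> nat set \<Rightarrow> nat set \<Rightarrow> bool" where
  "bq n I q p \<longleftrightarrow> p \<in> edges n \<and> p \<subseteq> (\<Union>i\<in>q. I i) \<and> (\<forall>i\<in>q. p \<inter> I i \<noteq> {})"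

text \<open>Id_I(x) = sum over q of x(q) b_q, computed in F_2 (parity).\<close>
definition IdI :: "nat \<Rightarrow> nat \<Rightarrow> (nat \<Rightarrow> nat set) \<Rightarrow> (nat set \<Rightarrow> bool) \<Rightarrow> nat set \<Rightarrow> bool" where
  "IdI n m I x p \<longleftrightarrow> odd (card {q\<in>edges m. x q \<and> bq n I q p})"

definition shift_ok :: "nat \<Rightarrow> nat \<Rightarrow> (nat \<Rightarrow> nat set) \<Rightarrow> (nat set \<Rightarrow> bool) \<Rightarrow> bool" where
  "shift_ok n m I c \<longleftrightarrow> c \<in> cube n \<and>
     (\<forall>p. p \<subseteq> (\<Union>i\<in>{1..m}. I i) \<and> p \<noteq> {} \<and> card p \<le> 2 \<longrightarrow> \<not> c p)"

text \<open>HJ-embedding e = Id_I + c (addition in F_2 = xor).\<close>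
definition hj_emb :: "nat \<Rightarrow> nat \<Rightarrow> (nat \<Rightarrow> nat set) \<Rightarrow> (nat set \<Rightarrow> bool)
    \<Rightarrow> (nat set \<Rightarrow> bool) \<Rightarrow> (nat set \<Rightarrow> bool)" where
  "hj_emb n m I c x = (\<lambda>p. IdI n m I x p \<noteq> c p)"

definition hj_space :: "nat \<Rightarrow> nat \<Rightarrow> (nat \<Rightarrow> nat set) \<Rightarrow> (nat set \<Rightarrow> bool)
    \<Rightarrow> (nat set \<Rightarrow> bool) set" where
  "hj_space n m I c = hj_emb n m I c ` cube m"

end

theory Submission
  imports Defs "HOL-Library.Ramsey"
begin

text \<open>Write \<open>Q\<close> with integer coefficients \<open>coef F\<close> on families \<open>F\<close> of at most \<open>d\<close> edges.
  By Ramsey's theorem there is a large set \<open>S \<subseteq> [n]\<close> on which \<open>coef F mod 2^k\<close> does not change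
  when the vertices of \<open>F\<close> are moved by an order-preserving map inside \<open>S\<close>. Cut \<open>S\<close> into
  \<open>T*m\<close> consecutive blocks of size \<open>s = 2^k * (2d)!\<close> and use them as the wildcard sets of
  \<open>T\<close> families of block HJ-subspaces. On such a subspace the coefficient of a degree-\<open>d\<close>
  monomial of \<open>Q \<circ> e\<close> is a sum of \<open>coef F\<close>; grouping the \<open>F\<close> by their trace on one wildcard
  set, traces of equal size \<open>r\<close> contribute equal residues and there are \<open>s choose r\<close> of them,
  which \<open>2^k\<close> divides for \<open>1 \<le> r \<le> 2d\<close>. So the degree drops. Finally, a point of the cube
  lies in the subspace of family \<open>t\<close> whose shift is read off outside the wildcards with
  probability at least \<open>2^-2^(ms)\<close>, independently for the disjoint families; assigning each point
  to the first family it fits leaves at most a \<open>(1 - 2^-2^(ms))^T\<close> fraction uncovered.\<close>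

lemma sorted_list_of_set_image_strict_mono:
  fixes X :: "'a::linorder set" and \<phi> :: "'a \<Rightarrow> 'b::linorder"
  assumes "finite X" "strict_mono_on X \<phi>"
  shows "sorted_list_of_set (\<phi> ` X) = map \<phi> (sorted_list_of_set X)"
proof -
  have inj: "inj_on \<phi> X" using assms(2) strict_mono_on_imp_inj_on by blast
  have "sorted_wrt (<) (sorted_list_of_set X)" by simp
  then have "sorted_wrt (<) (map \<phi> (sorted_list_of_set X))"
    unfolding sorted_wrt_map
    by (rule sorted_wrt_mono_rel[rotated]) (use assms in \<open>auto simp: strict_mono_on_def\<close>)
  then show ?thesis
    using assms inj
    by (subst sorted_list_of_set_unique[symmetric]) (auto simp: card_image distinct_card[symmetric])
qed

lemma ramsey_lessThan_finite_colours:
  fixes CS :: "'c set"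
  assumes "finite CS"
  shows "\<exists>N::nat. \<forall>col\<in>nsets {..<N} r \<rightarrow> CS.
     \<exists>H\<in>nsets {..<N} M. \<forall>Y\<in>nsets H r. \<forall>Y'\<in>nsets H r. col Y = col Y'"
proof -
  obtain h where h: "bij_betw h CS {0..<card CS}"
    using ex_bij_betw_finite_nat[OF assms] by blast
  obtain N :: nat where N: "partn_lst {..<N} (replicate (card CS) M) r"
    using ramsey_full by blast
  show ?thesis
  proof (intro exI[of _ N] ballI)
    fix col assume col: "col \<in> nsets {..<N} r \<rightarrow> CS"
    have "h \<circ> col \<in> nsets {..<N} r \<rightarrow> {..<length (replicate (card CS) M)}"
    proof
      fix Y assume "Y \<in> nsets {..<N} r"
      then have "h (col Y) \<in> h ` CS" using col by blast
      then show "(h \<circ> col) Y \<in> {..<length (replicate (card CS) M)}"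
        using h by (simp add: bij_betw_def)
    qed
    then obtain i H where i: "i < length (replicate (card CS) M)"
      and H: "H \<in> nsets {..<N} (replicate (card CS) M ! i)"
      and hom: "(h \<circ> col) ` nsets H r \<subseteq> {i}"
      by (rule partn_lstE[OF N _ refl])
    have "H \<subseteq> {..<N}" using H by (simp add: nsets_def)
    have "col Y = col Y'" if "Y \<in> nsets H r" "Y' \<in> nsets H r" for Y Y'
    proof -
      have "h (col Y) = h (col Y')" using hom that by auto
      moreover have "col Y \<in> CS" "col Y' \<in> CS"
        using col that nsets_mono[OF \<open>H \<subseteq> {..<N}\<close>] by auto
      ultimately show ?thesis using h by (metis bij_betw_def inj_onD)
    qed
    moreover have "H \<in> nsets {..<N} M" using H i by simp
    ultimately show "\<exists>H\<in>nsets {..<N} M. \<forall>Y\<in>nsets H r. \<forall>Y'\<in>nsets H r. col Y = col Y'"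
      by blast
  qed
qed

lemma ramsey_finite_colours:
  fixes CS :: "'c set"
  assumes "finite CS"
  obtains N where "\<And>(X :: 'a set) col. finite X \<Longrightarrow> N \<le> card X \<Longrightarrow> col \<in> nsets X r \<rightarrow> CS \<Longrightarrow>
     \<exists>H\<subseteq>X. card H = M \<and> (\<forall>Y\<in>nsets H r. \<forall>Y'\<in>nsets H r. col Y = col Y')"
proof -
  obtain N :: nat where N: "\<forall>col\<in>nsets {..<N} r \<rightarrow> CS.
     \<exists>H\<in>nsets {..<N} M. \<forall>Y\<in>nsets H r. \<forall>Y'\<in>nsets H r. col Y = col Y'"
    using ramsey_lessThan_finite_colours[OF assms] by blast
  show ?thesis
  proof (rule that)
    fix X :: "'a set" and col
    assume X: "finite X" "N \<le> card X" and col: "col \<in> nsets X r \<rightarrow> CS"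
    obtain X0 where X0: "X0 \<subseteq> X" "card X0 = N" "finite X0"
      using obtain_subset_with_card_n[OF X(2)] by blast
    then obtain g0 where "bij_betw g0 {0..<card X0} X0"
      using ex_bij_betw_nat_finite by blast
    then obtain g where g: "bij_betw g {..<N} X0"
      using X0(2) by (simp add: atLeast0LessThan)
    have "(`) g \<in> nsets {..<N} r \<rightarrow> nsets X r"
    proof (rule nsets_image_funcset)
      show "g \<in> {..<N} \<rightarrow> X" using bij_betw_imp_funcset[OF g] X0(1) by auto
      show "inj_on g {..<N}" using g by (rule bij_betw_imp_inj_on)
    qed
    have "col \<circ> (`) g \<in> nsets {..<N} r \<rightarrow> CS"
    proof
      fix Z assume "Z \<in> nsets {..<N} r"
      then have "g ` Z \<in> nsets X r" using \<open>(`) g \<in> nsets {..<N} r \<rightarrow> nsets X r\<close> by blast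
      then show "(col \<circ> (`) g) Z \<in> CS" using col by auto
    qed
    from bspec[OF N this] obtain H0 where H0: "H0 \<in> nsets {..<N} M"
      and hom: "\<forall>Z\<in>nsets H0 r. \<forall>Z'\<in>nsets H0 r. col (g ` Z) = col (g ` Z')"
      by auto
    have "H0 \<subseteq> {..<N}" "card H0 = M" using H0 by (simp_all add: nsets_def)
    then have gH0: "bij_betw g H0 (g ` H0)"
      using g bij_betw_imp_inj_on inj_on_subset inj_on_imp_bij_betw by metis
    have "col Y = col Y'" if "Y \<in> nsets (g ` H0) r" "Y' \<in> nsets (g ` H0) r" for Y Y'
    proof -
      have "Y \<in> (`) g ` nsets H0 r" "Y' \<in> (`) g ` nsets H0 r"
        using that bij_betw_imp_surj_on[OF bij_betw_nsets[OF gH0]] by simp_all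
      then show ?thesis using hom by blast
    qed
    moreover have "g ` H0 \<subseteq> X"
      using \<open>H0 \<subseteq> {..<N}\<close> g X0(1) bij_betw_imp_surj_on by blast
    moreover have "card (g ` H0) = M"
      using bij_betw_same_card[OF gH0] \<open>card H0 = M\<close> by simp
    ultimately show "\<exists>H\<subseteq>X. card H = M \<and> (\<forall>Y\<in>nsets H r. \<forall>Y'\<in>nsets H r. col Y = col Y')"
      by blast
  qed
qed

definition place :: "nat set \<Rightarrow> nat set set \<Rightarrow> nat set set" where
  "place Y P = (`) ((!) (sorted_list_of_set Y)) ` P"

lemma place_image_strict_mono:
  assumes "finite Y" "strict_mono_on Y \<psi>" "P \<subseteq> Pow {..<card Y}"
  shows "place (\<psi> ` Y) P = (`) \<psi> ` place Y P"
proof -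
  have nth: "sorted_list_of_set (\<psi> ` Y) ! j = \<psi> (sorted_list_of_set Y ! j)" if "j < card Y" for j
    using that assms(1) by (simp add: sorted_list_of_set_image_strict_mono[OF assms(1,2)])
  have "(!) (sorted_list_of_set (\<psi> ` Y)) ` p = \<psi> ` (!) (sorted_list_of_set Y) ` p" if "p \<in> P" for p
    unfolding image_image
    by (rule image_cong[OF refl]) (use that assms(3) nth in blast)
  then show ?thesis
    unfolding place_def image_image by (rule image_cong[OF refl])
qed

lemma family_eq_place:
  assumes "finite Y" "\<Union>F \<subseteq> Y"
  obtains P where "P \<subseteq> Pow {..<card Y}" "F = place Y P"
proof
  define L where "L = sorted_list_of_set Y"
  have L: "set L = Y" "length L = card Y" using assms(1) by (simp_all add: L_def)
  have "(!) L ` {j. j < card Y \<and> L ! j \<in> p} = p" if "p \<in> F" for p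
  proof
    show "p \<subseteq> (!) L ` {j. j < card Y \<and> L ! j \<in> p}"
    proof
      fix v assume "v \<in> p"
      then have "v \<in> set L" using that assms(2) L by blast
      then obtain j where "j < card Y" "L ! j = v" using L by (auto simp: in_set_conv_nth)
      then show "v \<in> (!) L ` {j. j < card Y \<and> L ! j \<in> p}" using \<open>v \<in> p\<close> by force
    qed
  qed auto
  then show "F = place Y ((\<lambda>p. {j. j < card Y \<and> L ! j \<in> p}) ` F)"
    by (simp add: place_def L_def image_image)
qed auto

lemma strict_mono_on_extend_above:
  fixes \<phi> :: "'a::linorder \<Rightarrow> 'a"
  assumes mono: "strict_mono_on X \<phi>" and above: "\<forall>x\<in>X. \<forall>y\<in>P. x < y \<and> \<phi> x < y"
  shows "strict_mono_on (X \<union> P) (\<lambda>v. if v \<in> X then \<phi> v else v)"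
proof (rule strict_mono_onI)
  fix u v assume uv: "u \<in> X \<union> P" "v \<in> X \<union> P" "u < v"
  show "(if u \<in> X then \<phi> u else u) < (if v \<in> X then \<phi> v else v)"
  proof (cases "u \<in> X"; cases "v \<in> X")
    assume "u \<in> X" "v \<in> X"
    then show ?thesis using mono uv(3) by (simp add: strict_mono_on_def)
  next
    assume "u \<in> X" "v \<notin> X"
    then show ?thesis using above uv(2) by simp
  next
    assume "u \<notin> X" "v \<in> X"
    then have "v < u" using above uv(1) by simp
    then show ?thesis using uv(3) by simp
  qed (use uv(3) in simp)
qed

lemma split_lower_upper:
  fixes H :: "'a::linorder set"
  assumes "finite H" "card H = M + r"
  obtains S R where "S \<subseteq> H" "R \<subseteq> H" "card S = M" "card R = r" "\<forall>x\<in>S. \<forall>y\<in>R. x < y"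
proof
  define L where "L = sorted_list_of_set H"
  have L: "sorted_wrt (<) (take M L @ drop M L)" "distinct L" "length L = M + r" "set L = H"
    using assms by (simp_all add: L_def)
  show "card (set (take M L)) = M" "card (set (drop M L)) = r"
    using L(2,3) by (simp_all add: distinct_card)
  show "set (take M L) \<subseteq> H" "set (drop M L) \<subseteq> H"
    using set_take_subset[of M L] set_drop_subset[of M L] L(4) by auto
  show "\<forall>x\<in>set (take M L). \<forall>y\<in>set (drop M L). x < y"
    using L(1) unfolding sorted_wrt_append by blast
qed

definition coef_order_invariant :: "nat \<Rightarrow> nat \<Rightarrow> nat set \<Rightarrow> (nat set set \<Rightarrow> int) \<Rightarrow> bool" where
  "coef_order_invariant k r S coef \<longleftrightarrow>
     (\<forall>F \<phi>. \<Union>F \<subseteq> S \<longrightarrow> card (\<Union>F) \<le> r \<longrightarrow> strict_mono_on (\<Union>F) \<phi> \<longrightarrow> \<phi> ` \<Union>F \<subseteq> S \<longrightarrow>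
        coef ((`) \<phi> ` F) mod 2^k = coef F mod 2^k)"

lemma coef_order_invariant_below_homogeneous:
  fixes S R H :: "nat set"
  assumes "finite H" "S \<subseteq> H" "R \<subseteq> H" "r \<le> card R" "\<forall>x\<in>S. \<forall>y\<in>R. x < y"
    and hom: "\<And>Y Y' P. Y \<in> nsets H r \<Longrightarrow> Y' \<in> nsets H r \<Longrightarrow> P \<subseteq> Pow {..<r} \<Longrightarrow>
      coef (place Y P) mod 2^k = coef (place Y' P) mod 2^k"
  shows "coef_order_invariant k r S coef"
  unfolding coef_order_invariant_def
proof (intro allI impI)
  fix F and \<phi> :: "nat \<Rightarrow> nat"
  assume XS: "\<Union>F \<subseteq> S" and Xr: "card (\<Union>F) \<le> r" and mono: "strict_mono_on (\<Union>F) \<phi>"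
    and \<phi>S: "\<phi> ` \<Union>F \<subseteq> S"
  define X where "X = \<Union>F"
  have finX: "finite X"
    unfolding X_def using XS finite_subset[OF assms(2,1)] by (rule finite_subset)
  have "r - card X \<le> card R" using assms(4) by linarith
  then obtain Pad where Pad: "Pad \<subseteq> R" "card Pad = r - card X" and finPad: "finite Pad"
    by (rule obtain_subset_with_card_n)
  have X_below: "x < y" if "x \<in> X" "y \<in> Pad" for x y
    using that XS Pad(1) assms(5) unfolding X_def by blast
  have \<phi>X_below: "\<phi> x < y" if "x \<in> X" "y \<in> Pad" for x y
    using that \<phi>S Pad(1) assms(5) unfolding X_def by blast
  define \<psi> where "\<psi> v = (if v \<in> X then \<phi> v else v)" for v
  define Y where "Y = X \<union> Pad"
  have finY: "finite Y" using finX finPad by (simp add: Y_def)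
  have disj: "X \<inter> Pad = {}" using X_below by fastforce
  then have "card Y = card X + card Pad"
    unfolding Y_def by (rule card_Un_disjoint[OF finX finPad])
  then have cardY: "card Y = r" using Pad(2) Xr by (simp add: X_def)
  have \<psi>mono: "strict_mono_on Y \<psi>"
    unfolding Y_def \<psi>_def using mono X_below \<phi>X_below unfolding X_def
    by (intro strict_mono_on_extend_above) auto
  have \<psi>Y: "\<psi> ` Y = \<phi> ` X \<union> Pad" using disj by (auto simp: Y_def \<psi>_def)
  have "card (\<psi> ` Y) = r"
    using card_image[OF strict_mono_on_imp_inj_on[OF \<psi>mono]] cardY by simp
  moreover have "Y \<subseteq> H" "\<psi> ` Y \<subseteq> H"
    using XS \<phi>S assms(2,3) Pad(1) unfolding \<psi>Y unfolding Y_def X_def by auto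
  ultimately have nsets: "Y \<in> nsets H r" "\<psi> ` Y \<in> nsets H r"
    using cardY finY by (auto simp: nsets_def)
  obtain P where P: "P \<subseteq> Pow {..<card Y}" "F = place Y P"
    using family_eq_place[OF finY] unfolding Y_def X_def by blast
  have "place (\<psi> ` Y) P = (`) \<psi> ` F"
    using place_image_strict_mono[OF finY \<psi>mono P(1)] P(2) by simp
  also have "\<dots> = (`) \<phi> ` F"
    by (rule image_cong[OF refl], rule image_cong[OF refl]) (auto simp: \<psi>_def X_def)
  finally have "place (\<psi> ` Y) P = (`) \<phi> ` F" .
  moreover have "coef (place (\<psi> ` Y) P) mod 2^k = coef (place Y P) mod 2^k"
    using hom[OF nsets(2) nsets(1)] P(1) cardY by simp
  ultimately show "coef ((`) \<phi> ` F) mod 2^k = coef F mod 2^k"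
    using P(2) by simp
qed

text \<open>Colour an \<open>r\<close>-set \<open>Y\<close> by the residues of \<open>coef\<close> on all families placed on \<open>Y\<close>. On the
  lower part \<open>S\<close> of a homogeneous set, an order-preserving move of a family becomes a move
  between two \<open>r\<close>-sets after padding both with the same points above \<open>S\<close>.\<close>
lemma ramsey_coef_order_invariant:
  obtains N where "\<And>(X :: nat set) coef. finite X \<Longrightarrow> N \<le> card X \<Longrightarrow>
     \<exists>S\<subseteq>X. card S = M \<and> coef_order_invariant k r S coef"
proof -
  define CS :: "(nat set set \<Rightarrow> int) set" where
    "CS = PiE (Pow (Pow {..<r})) (\<lambda>_. {0..<2^k})"
  have "finite CS" unfolding CS_def by (intro finite_PiE) auto
  then obtain N where N: "\<And>(X :: nat set) col. finite X \<Longrightarrow> N \<le> card X \<Longrightarrow> col \<in> nsets X r \<rightarrow> CS \<Longrightarrow>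
     \<exists>H\<subseteq>X. card H = M + r \<and> (\<forall>Y\<in>nsets H r. \<forall>Y'\<in>nsets H r. col Y = col Y')"
    by (rule ramsey_finite_colours[where r = r and M = "M + r"]) blast
  show ?thesis
  proof (rule that)
    fix X :: "nat set" and coef :: "nat set set \<Rightarrow> int"
    assume X: "finite X" "N \<le> card X"
    define col where "col Y = restrict (\<lambda>P. coef (place Y P) mod 2^k) (Pow (Pow {..<r}))" for Y
    have "col \<in> nsets X r \<rightarrow> CS" by (auto simp: col_def CS_def restrict_PiE_iff)
    then obtain H where H: "H \<subseteq> X" "card H = M + r"
      and hom: "\<forall>Y\<in>nsets H r. \<forall>Y'\<in>nsets H r. col Y = col Y'"
      using N[OF X] by blast
    have finH: "finite H" using finite_subset[OF H(1) X(1)] .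
    then obtain S R where SR: "S \<subseteq> H" "R \<subseteq> H" "card S = M" "card R = r" "\<forall>x\<in>S. \<forall>y\<in>R. x < y"
      using H(2) by (rule split_lower_upper)
    have "coef_order_invariant k r S coef"
    proof (rule coef_order_invariant_below_homogeneous[OF finH SR(1,2) _ SR(5)])
      show "r \<le> card R" using SR(4) by simp
      fix Y Y' and P :: "nat set set"
      assume "Y \<in> nsets H r" "Y' \<in> nsets H r" "P \<subseteq> Pow {..<r}"
      then have "col Y P = col Y' P" using hom by metis
      then show "coef (place Y P) mod 2^k = coef (place Y' P) mod 2^k"
        using \<open>P \<subseteq> Pow {..<r}\<close> by (simp add: col_def)
    qed
    then show "\<exists>S\<subseteq>X. card S = M \<and> coef_order_invariant k r S coef"
      using SR(1,3) H(1) by blast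
  qed
qed

text \<open>The increasing bijection from \<open>W\<close> onto \<open>W'\<close> (when \<open>card W = card W'\<close>), extended by
  the identity outside \<open>W\<close>.\<close>
definition order_bij :: "nat set \<Rightarrow> nat set \<Rightarrow> nat \<Rightarrow> nat" where
  "order_bij W W' v =
     (case map_of (zip (sorted_list_of_set W) (sorted_list_of_set W')) v of Some w \<Rightarrow> w | None \<Rightarrow> v)"

context
  fixes W W' :: "nat set"
  assumes fin: "finite W" "finite W'" and card_eq: "card W = card W'"
begin

lemma order_bij_outside: "v \<notin> W \<Longrightarrow> order_bij W W' v = v"
  unfolding order_bij_def using fin card_eq by (subst map_of_zip_is_None[THEN iffD2]) auto

lemma order_bij_nth:
  "i < card W \<Longrightarrow> order_bij W W' (sorted_list_of_set W ! i) = sorted_list_of_set W' ! i"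
  unfolding order_bij_def using fin card_eq by (subst map_of_zip_nth) auto

lemma nth_sorted_list_of_setE:
  assumes "v \<in> W"
  obtains i where "i < card W" "v = sorted_list_of_set W ! i"
  using assms fin(1) by (metis in_set_conv_nth length_sorted_list_of_set set_sorted_list_of_set)

lemma order_bij_in: "v \<in> W \<Longrightarrow> order_bij W W' v \<in> W'"
  by (metis nth_sorted_list_of_setE order_bij_nth card_eq fin(2) length_sorted_list_of_set nth_mem
      set_sorted_list_of_set)

lemma order_bij_inverse: "v \<in> W \<Longrightarrow> order_bij W' W (order_bij W W' v) = v"
proof -
  assume "v \<in> W"
  then obtain i where i: "i < card W" "v = sorted_list_of_set W ! i"
    by (rule nth_sorted_list_of_setE)
  have "order_bij W' W (sorted_list_of_set W' ! i) = sorted_list_of_set W ! i"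
    unfolding order_bij_def using fin card_eq i(1) by (subst map_of_zip_nth) auto
  then show ?thesis using order_bij_nth i by simp
qed

lemma strict_mono_on_order_bij: "strict_mono_on W (order_bij W W')"
proof (rule strict_mono_onI)
  fix u v assume uv: "u \<in> W" "v \<in> W" "u < v"
  obtain i where i: "i < card W" "u = sorted_list_of_set W ! i"
    using uv(1) by (rule nth_sorted_list_of_setE)
  obtain j where j: "j < card W" "v = sorted_list_of_set W ! j"
    using uv(2) by (rule nth_sorted_list_of_setE)
  have sorted: "sorted_wrt (<) (sorted_list_of_set W)" "sorted_wrt (<) (sorted_list_of_set W')"
    by simp_all
  have "i < j"
  proof (rule ccontr)
    assume "\<not> i < j"
    then have "v \<le> u"
      using i j sorted(1) fin(1)
      by (metis le_eq_less_or_eq length_sorted_list_of_set not_less sorted_wrt_nth_less)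
    then show False using uv(3) by simp
  qed
  then show "order_bij W W' u < order_bij W W' v"
    using order_bij_nth i j sorted_wrt_nth_less[OF sorted(2)] card_eq fin(2) by simp
qed

end

lemma order_bij_image:
  assumes "finite W" "finite W'" "card W = card W'"
  shows "order_bij W W' ` W = W'"
proof
  show "order_bij W W' ` W \<subseteq> W'" using order_bij_in[OF assms] by blast
  show "W' \<subseteq> order_bij W W' ` W"
  proof
    fix w assume "w \<in> W'"
    then have "order_bij W W' (order_bij W' W w) = w" "order_bij W' W w \<in> W"
      using order_bij_inverse[OF assms(2,1) assms(3)[symmetric]]
        order_bij_in[OF assms(2,1) assms(3)[symmetric]] by auto
    then show "w \<in> order_bij W W' ` W" by (metis image_eqI)
  qed
qed

lemma finite_edges: "finite (edges n)"
  unfolding edges_def by (rule finite_subset[of _ "Pow {1..n}"]) auto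

locale wildcard_blocks =
  fixes n m d k s :: nat and I :: "nat \<Rightarrow> nat set" and S :: "nat set"
    and coef :: "nat set set \<Rightarrow> int"
  assumes card_I: "\<And>i. i \<in> {1..m} \<Longrightarrow> card (I i) = s"
    and I_subset: "\<And>i. i \<in> {1..m} \<Longrightarrow> I i \<subseteq> S"
    and S_subset: "S \<subseteq> {1..n}"
    and I_less: "\<And>i j a b. i \<in> {1..m} \<Longrightarrow> j \<in> {1..m} \<Longrightarrow> i < j \<Longrightarrow> a \<in> I i \<Longrightarrow> b \<in> I j \<Longrightarrow> a < b"
    and invariant: "coef_order_invariant k (2*d) S coef"
    and dvd_choose: "\<And>r. 1 \<le> r \<Longrightarrow> r \<le> 2*d \<Longrightarrow> (2::int)^k dvd int (s choose r)"
begin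

definition "U = (\<Union>i\<in>{1..m}. I i)"

definition "touched p = {i\<in>{1..m}. p \<inter> I i \<noteq> {}}"

text \<open>For \<open>card G = d\<close>, the monomials of \<open>Q\<close> contributing (with weight 1) to the coefficient of the
  monomial \<open>G\<close> of \<open>Q \<circ> hj_emb n m I c\<close>.\<close>
definition "box G = {F. F \<subseteq> {p\<in>edges n. p \<subseteq> U} \<and> card F = d \<and> touched ` F = G}"

definition "fibre G i W = {F\<in>box G. \<Union>F \<inter> I i = W}"

lemma finite_I: "i \<in> {1..m} \<Longrightarrow> finite (I i)"
  using I_subset S_subset finite_subset by (meson finite_atLeastAtMost subset_trans)

lemma I_disjoint: "i \<in> {1..m} \<Longrightarrow> j \<in> {1..m} \<Longrightarrow> i \<noteq> j \<Longrightarrow> I i \<inter> I j = {}"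
  using I_less by (metis disjoint_iff less_irrefl linorder_neqE_nat)

lemma U_subset: "U \<subseteq> S" using I_subset U_def by blast

lemma finite_box: "finite (box G)"
  by (rule finite_subset[of _ "Pow {p\<in>edges n. p \<subseteq> U}"]) (auto simp: box_def finite_edges)

lemma box_Union_subset: "F \<in> box G \<Longrightarrow> \<Union>F \<subseteq> U"
  by (auto simp: box_def)

lemma card_Union_box: "F \<in> box G \<Longrightarrow> card (\<Union>F) \<le> 2*d"
proof -
  assume F: "F \<in> box G"
  have "card (\<Union>F) \<le> sum card F" by (rule card_Union_le_sum_card)
  also have "\<dots> \<le> sum (\<lambda>_. 2) F"
    by (rule sum_mono) (use F in \<open>auto simp: box_def edges_def\<close>)
  also have "\<dots> = 2 * d" using F by (simp add: box_def)
  finally show ?thesis .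
qed

context
  fixes i0 :: nat and W W' :: "nat set"
  assumes i0: "i0 \<in> {1..m}" and W: "W \<subseteq> I i0" and W': "W' \<subseteq> I i0" and card_eq: "card W = card W'"
begin

lemma finite_W: "finite W" "finite W'"
  using finite_I[OF i0] W W' finite_subset by auto

lemma order_bij_in_I_iff:
  assumes "X \<inter> I i0 = W" "v \<in> X" "i \<in> {1..m}"
  shows "order_bij W W' v \<in> I i \<longleftrightarrow> v \<in> I i"
proof (cases "v \<in> W")
  case True
  then have "v \<in> I i0" "order_bij W W' v \<in> I i0" using order_bij_in[OF finite_W card_eq] W W' by auto
  then show ?thesis using I_disjoint[OF assms(3) i0] by (cases "i = i0") auto
next
  case False
  then show ?thesis using order_bij_outside[OF finite_W card_eq] by simp
qed

text \<open>Points of \<open>X\<close> outside \<open>I i0\<close> lie in other wildcard sets, entirely below or above \<open>I i0\<close>,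
  so moving points only inside \<open>I i0\<close> keeps the order.\<close>
lemma strict_mono_on_order_bij_wild:
  assumes X: "X \<subseteq> U" "X \<inter> I i0 = W"
  shows "strict_mono_on X (order_bij W W')"
proof (rule strict_mono_onI)
  note outside = order_bij_outside[OF finite_W card_eq]
  note inside = order_bij_in[OF finite_W card_eq]
  have other: "\<exists>j\<in>{1..m}. j \<noteq> i0 \<and> v \<in> I j" if vX: "v \<in> X" and vW: "v \<notin> W" for v
  proof -
    obtain j where "j \<in> {1..m}" "v \<in> I j" using vX X(1) unfolding U_def by blast
    moreover have "v \<notin> I i0" using vX vW X(2) by blast
    ultimately show ?thesis by metis
  qed
  fix u v assume uv: "u \<in> X" "v \<in> X" "u < v"
  show "order_bij W W' u < order_bij W W' v"
  proof (cases "u \<in> W"; cases "v \<in> W")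
    assume "u \<in> W" "v \<in> W"
    then show ?thesis
      using strict_mono_on_order_bij[OF finite_W card_eq] uv(3) by (simp add: strict_mono_on_def)
  next
    assume "u \<notin> W" "v \<notin> W"
    then show ?thesis using outside uv(3) by simp
  next
    assume u: "u \<in> W" and v: "v \<notin> W"
    then obtain j where j: "j \<in> {1..m}" "j \<noteq> i0" "v \<in> I j" using other uv(2) by blast
    have "\<not> j < i0" using I_less[OF j(1) i0 _ j(3)] u W uv(3) by force
    then have "i0 < j" using j(2) by simp
    then show ?thesis using I_less[OF i0 j(1) _ _ j(3)] inside[OF u] W' outside[OF v] by auto
  next
    assume u: "u \<notin> W" and v: "v \<in> W"
    then obtain j where j: "j \<in> {1..m}" "j \<noteq> i0" "u \<in> I j" using other uv(1) by blast
    have "\<not> i0 < j" using I_less[OF i0 j(1) _ _ j(3)] v W uv(3) by force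
    then have "j < i0" using j(2) by simp
    then show ?thesis using I_less[OF j(1) i0 _ j(3)] inside[OF v] W' outside[OF u] by auto
  qed
qed

lemma order_bij_image_fibre:
  assumes F: "F \<in> fibre G i0 W"
  shows "(`) (order_bij W W') ` F \<in> fibre G i0 W'"
proof -
  have FU: "\<Union>F \<subseteq> U" and FW: "\<Union>F \<inter> I i0 = W" and Fb: "F \<in> box G"
    using F box_Union_subset by (auto simp: fibre_def)
  have inj: "inj_on (order_bij W W') (\<Union>F)"
    using strict_mono_on_order_bij_wild[OF FU FW] by (rule strict_mono_on_imp_inj_on)
  have in_I: "order_bij W W' v \<in> I i \<longleftrightarrow> v \<in> I i" if "v \<in> \<Union>F" "i \<in> {1..m}" for v i
    using order_bij_in_I_iff[OF FW that] .
  have "(`) (order_bij W W') ` F \<subseteq> {p\<in>edges n. p \<subseteq> U}"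
  proof
    fix p' assume "p' \<in> (`) (order_bij W W') ` F"
    then obtain p where p: "p \<in> F" "p' = order_bij W W' ` p" by auto
    have "p \<in> edges n" using p Fb by (auto simp: box_def)
    moreover have "card p' = card p" using p inj by (metis Union_upper card_image inj_on_subset)
    moreover have "p' \<subseteq> U" using p FU in_I unfolding U_def by blast
    ultimately show "p' \<in> {p\<in>edges n. p \<subseteq> U}"
      using U_subset S_subset p(2) by (auto simp: edges_def)
  qed
  moreover have "card ((`) (order_bij W W') ` F) = card F" using inj_on_image[OF inj] card_image by blast
  moreover have "touched ` (`) (order_bij W W') ` F = touched ` F"
  proof -
    have "touched (order_bij W W' ` p) = touched p" if "p \<in> F" for p
      unfolding touched_def using in_I that by fastforce
    then show ?thesis by (simp add: image_image cong: image_cong)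
  qed
  moreover have "\<Union>((`) (order_bij W W') ` F) \<inter> I i0 = W'"
  proof -
    have "\<Union>((`) (order_bij W W') ` F) \<inter> I i0 = order_bij W W' ` W"
      using in_I[OF _ i0] FW by auto
    also have "\<dots> = W'" using order_bij_image[OF finite_W card_eq] .
    finally show ?thesis .
  qed
  ultimately show ?thesis using Fb by (auto simp: fibre_def box_def)
qed

lemma order_bij_image_fibre_inverse:
  assumes F: "F \<in> fibre G i0 W"
  shows "(`) (order_bij W' W) ` (`) (order_bij W W') ` F = F"
proof -
  have "order_bij W' W (order_bij W W' v) = v" if "v \<in> \<Union>F" for v
  proof (cases "v \<in> W")
    case True then show ?thesis using order_bij_inverse[OF finite_W card_eq] by simp
  next
    case False
    then have "order_bij W W' v = v" "v \<notin> W'"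
      using order_bij_outside[OF finite_W card_eq] W' F that by (auto simp: fibre_def)
    then show ?thesis using order_bij_outside[OF finite_W(2,1) card_eq[symmetric]] by simp
  qed
  then have "order_bij W' W ` order_bij W W' ` p = p" if "p \<in> F" for p
    using that by (force simp: image_image)
  then show ?thesis by (simp add: image_image cong: image_cong)
qed

lemma coef_order_bij_image_fibre:
  assumes F: "F \<in> fibre G i0 W"
  shows "coef ((`) (order_bij W W') ` F) mod 2^k = coef F mod 2^k"
proof -
  have FU: "\<Union>F \<subseteq> U" and FW: "\<Union>F \<inter> I i0 = W" and Fb: "F \<in> box G"
    using F box_Union_subset by (auto simp: fibre_def)
  have "order_bij W W' ` \<Union>F \<subseteq> U"
    using FU order_bij_in_I_iff[OF FW] unfolding U_def by blast
  then show ?thesis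
    using invariant FU U_subset card_Union_box[OF Fb] strict_mono_on_order_bij_wild[OF FU FW]
    unfolding coef_order_invariant_def by (meson order_trans)
qed

end

end

lemma sum_mod_eq_card_mult:
  fixes T :: "'a \<Rightarrow> int"
  assumes "\<And>x. x \<in> A \<Longrightarrow> T x mod K = c mod K"
  shows "(\<Sum>x\<in>A. T x) mod K = (int (card A) * c) mod K"
proof -
  have "(\<Sum>x\<in>A. T x) mod K = (\<Sum>x\<in>A. T x mod K) mod K" by (simp add: mod_sum_eq)
  also have "\<dots> = (\<Sum>x\<in>A. c mod K) mod K" using assms by simp
  also have "\<dots> = (int (card A) * c) mod K" by (simp add: mod_mult_right_eq)
  finally show ?thesis .
qed

context wildcard_blocks
begin

lemma fibre_sum_mod_eq:
  assumes "i0 \<in> {1..m}" "W \<subseteq> I i0" "W' \<subseteq> I i0" "card W = card W'"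
  shows "(\<Sum>F\<in>fibre G i0 W. coef F) mod 2^k = (\<Sum>F\<in>fibre G i0 W'. coef F) mod 2^k"
proof -
  have "(\<Sum>F\<in>fibre G i0 W. coef ((`) (order_bij W W') ` F)) = (\<Sum>F\<in>fibre G i0 W'. coef F)"
    by (rule sum.reindex_bij_witness[of _ "\<lambda>F. (`) (order_bij W' W) ` F" "\<lambda>F. (`) (order_bij W W') ` F"])
      (use order_bij_image_fibre[OF assms] order_bij_image_fibre[OF assms(1,3,2) assms(4)[symmetric]]
        order_bij_image_fibre_inverse[OF assms]
        order_bij_image_fibre_inverse[OF assms(1,3,2) assms(4)[symmetric]] in auto)
  then have "(\<Sum>F\<in>fibre G i0 W'. coef F) mod 2^k
      = (\<Sum>F\<in>fibre G i0 W. coef ((`) (order_bij W W') ` F) mod 2^k) mod 2^k"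
    by (simp add: mod_sum_eq)
  also have "\<dots> = (\<Sum>F\<in>fibre G i0 W. coef F mod 2^k) mod 2^k"
    using coef_order_bij_image_fibre[OF assms] by (simp cong: sum.cong)
  also have "\<dots> = (\<Sum>F\<in>fibre G i0 W. coef F) mod 2^k" by (simp add: mod_sum_eq)
  finally show ?thesis by simp
qed

lemma fibre_empty:
  assumes "q \<in> G" "i0 \<in> q" "W \<subseteq> I i0" "card W = 0 \<or> 2*d < card W"
  shows "fibre G i0 W = {}"
proof (rule ccontr)
  assume "fibre G i0 W \<noteq> {}"
  then obtain F where F: "F \<in> box G" "\<Union>F \<inter> I i0 = W" by (auto simp: fibre_def)
  then obtain p where "p \<in> F" "q = touched p" using assms(1) by (auto simp: box_def)
  then have "W \<noteq> {}" using F(2) assms(2) by (auto simp: touched_def)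
  have "finite (\<Union>F)"
    using box_Union_subset[OF F(1)] U_subset S_subset finite_subset by (meson finite_atLeastAtMost subset_trans)
  then have "card W \<le> card (\<Union>F)" "finite W"
    using F(2) card_mono[of "\<Union>F" W] by auto
  then have "0 < card W" "card W \<le> card (\<Union>F)"
    using \<open>W \<noteq> {}\<close> by (simp_all add: card_gt_0_iff)
  then show False using assms(4) card_Union_box[OF F(1)] by linarith
qed

lemma fibre_level_sum_mod_eq_0:
  assumes G: "q \<in> G" "i0 \<in> q" "i0 \<in> {1..m}"
  shows "(\<Sum>W\<in>nsets (I i0) r. \<Sum>F\<in>fibre G i0 W. coef F) mod 2^k = 0"
proof (cases "1 \<le> r \<and> r \<le> 2*d")
  case False
  have "fibre G i0 W = {}" if "W \<in> nsets (I i0) r" for W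
  proof -
    have "W \<subseteq> I i0" "card W = r" using that by (simp_all add: nsets_def)
    moreover have "r = 0 \<or> 2*d < r" using False by linarith
    ultimately show ?thesis using fibre_empty[OF G(1,2)] by simp
  qed
  then show ?thesis by simp
next
  case True
  show ?thesis
  proof (cases "nsets (I i0) r = {}")
    case False
    then obtain W0 where W0: "W0 \<in> nsets (I i0) r" by blast
    have "(\<Sum>F\<in>fibre G i0 W. coef F) mod 2^k = (\<Sum>F\<in>fibre G i0 W0. coef F) mod 2^k"
      if "W \<in> nsets (I i0) r" for W
      using fibre_sum_mod_eq[OF G(3)] that W0 unfolding nsets_def by simp
    then have "(\<Sum>W\<in>nsets (I i0) r. \<Sum>F\<in>fibre G i0 W. coef F) mod 2^k
        = (int (card (nsets (I i0) r)) * (\<Sum>F\<in>fibre G i0 W0. coef F)) mod 2^k"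
      by (rule sum_mod_eq_card_mult)
    also have "\<dots> = (int (s choose r) * (\<Sum>F\<in>fibre G i0 W0. coef F)) mod 2^k"
      using card_I[OF G(3)] by simp
    also have "\<dots> = 0"
    proof -
      obtain c where "int (s choose r) = 2^k * c" using dvd_choose True by (meson dvdE)
      then show ?thesis by simp
    qed
    finally show ?thesis .
  qed simp
qed

text \<open>Group \<open>box G\<close> by the trace \<open>W\<close> on a wildcard set \<open>I i0\<close> touched by \<open>G\<close>: by order
  invariance all traces of one size \<open>r\<close> contribute the same residue, and there are
  \<open>s choose r\<close> of them, a multiple of \<open>2^k\<close>.\<close>
lemma box_sum_mod_eq_0:
  assumes G: "q \<in> G" "i0 \<in> q" "i0 \<in> {1..m}"
  shows "(\<Sum>F\<in>box G. coef F) mod 2^k = 0"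
proof -
  have finI: "finite (I i0)" and cardI: "card (I i0) = s" using finite_I card_I G(3) by auto
  have "(\<Sum>F\<in>box G. coef F) = (\<Sum>W\<in>Pow (I i0). \<Sum>F\<in>fibre G i0 W. coef F)"
    unfolding fibre_def by (rule sum.group[symmetric]) (use finite_box finI in auto)
  also have "\<dots> = (\<Sum>r\<in>{..s}. \<Sum>W\<in>{W\<in>Pow (I i0). card W = r}. \<Sum>F\<in>fibre G i0 W. coef F)"
    by (rule sum.group[symmetric]) (use finI cardI in \<open>auto intro: card_mono\<close>)
  also have "\<dots> = (\<Sum>r\<in>{..s}. \<Sum>W\<in>nsets (I i0) r. \<Sum>F\<in>fibre G i0 W. coef F)"
    using finI by (auto simp: nsets_def intro!: sum.cong intro: finite_subset)
  finally have "(\<Sum>F\<in>box G. coef F) mod 2^k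
      = (\<Sum>r\<in>{..s}. (\<Sum>W\<in>nsets (I i0) r. \<Sum>F\<in>fibre G i0 W. coef F) mod 2^k) mod 2^k"
    by (simp add: mod_sum_eq)
  then show ?thesis using fibre_level_sum_mod_eq_0[OF G] by simp
qed

end

definition monomial :: "(nat set \<Rightarrow> bool) \<Rightarrow> nat set set \<Rightarrow> int" where
  "monomial x F = (\<Prod>e\<in>F. if x e then 1 else 0)"

lemma sum_regroup_image:
  fixes c :: "'a \<Rightarrow> 'c::comm_semiring_0"
  assumes "finite A" "finite B" "g ` A \<subseteq> B"
  shows "(\<Sum>a\<in>A. c a * u (g a)) = (\<Sum>b\<in>B. (\<Sum>a\<in>{a\<in>A. g a = b}. c a) * u b)"
proof -
  have "(\<Sum>a\<in>A. c a * u (g a)) = (\<Sum>b\<in>B. \<Sum>a\<in>{a\<in>A. g a = b}. c a * u (g a))"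
    by (rule sum.group[symmetric]) (use assms in auto)
  also have "\<dots> = (\<Sum>b\<in>B. (\<Sum>a\<in>{a\<in>A. g a = b}. c a) * u b)"
    by (auto simp: sum_distrib_right intro!: sum.cong)
  finally show ?thesis .
qed

lemma kpoly_le_comp_substitution:
  fixes n m d k :: nat and Q :: "(nat set \<Rightarrow> bool) \<Rightarrow> int" and \<alpha> :: int
    and coef :: "nat set set \<Rightarrow> int" and e :: "(nat set \<Rightarrow> bool) \<Rightarrow> nat set \<Rightarrow> bool" and g :: "nat set set \<Rightarrow> nat set set"
    and w :: "nat set set \<Rightarrow> int"
  defines "D \<equiv> {F. F \<subseteq> edges n \<and> F \<noteq> {} \<and> card F \<le> d}"
  assumes "0 < d"
    and Q: "\<And>y. y \<in> cube n \<Longrightarrow> Q y = (\<alpha> + (\<Sum>F\<in>D. coef F * monomial y F)) mod 2^k"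
    and e: "\<And>x. x \<in> cube m \<Longrightarrow> e x \<in> cube n"
    and g: "\<And>F. F \<in> D \<Longrightarrow> g F \<subseteq> edges m \<and> card (g F) \<le> d"
    and subst: "\<And>F x. F \<in> D \<Longrightarrow> x \<in> cube m \<Longrightarrow> monomial (e x) F = w F * monomial x (g F)"
    and top: "\<And>G. G \<subseteq> edges m \<Longrightarrow> card G = d \<Longrightarrow> (\<Sum>F\<in>{F\<in>D. g F = G}. coef F * w F) mod 2^k = 0"
  shows "kpoly_le k m (d - 1) (Q \<circ> e)"
proof -
  define a where "a G = (\<Sum>F\<in>{F\<in>D. g F = G}. coef F * w F)" for G
  define Gm where "Gm = {G. G \<subseteq> edges m \<and> card G \<le> d}"
  define Dm where "Dm = {G. G \<subseteq> edges m \<and> G \<noteq> {} \<and> card G \<le> d - 1}"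
  define Gd where "Gd = {G. G \<subseteq> edges m \<and> card G = d}"
  have finD: "finite D" unfolding D_def
    by (rule finite_subset[of _ "Pow (edges n)"]) (auto simp: finite_edges)
  have finGm: "finite Gm" unfolding Gm_def
    by (rule finite_subset[of _ "Pow (edges m)"]) (auto simp: finite_edges)
  have Gm_split: "Gm = insert {} (Dm \<union> Gd)" "{} \<notin> Dm \<union> Gd" "Dm \<inter> Gd = {}"
    using \<open>0 < d\<close> by (auto simp: Gm_def Dm_def Gd_def)
  have finDm: "finite Dm" "finite Gd" using finGm Gm_split(1) by (auto intro: finite_subset)
  show ?thesis unfolding kpoly_le_def
  proof (intro exI ballI)
    fix x assume x: "x \<in> cube m"
    have "(\<Sum>F\<in>D. coef F * monomial (e x) F) = (\<Sum>F\<in>D. coef F * w F * monomial x (g F))"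
      by (intro sum.cong refl) (simp add: subst x)
    also have "\<dots> = (\<Sum>G\<in>Gm. a G * monomial x G)"
      unfolding a_def by (rule sum_regroup_image[OF finD finGm]) (use g in \<open>auto simp: Gm_def\<close>)
    also have "\<dots> = a {} + (\<Sum>G\<in>Dm. a G * monomial x G) + (\<Sum>G\<in>Gd. a G * monomial x G)"
      unfolding Gm_split(1) using Gm_split(2,3) finDm by (simp add: sum.union_disjoint monomial_def)
    finally have eq: "(\<Sum>F\<in>D. coef F * monomial (e x) F)
      = a {} + (\<Sum>G\<in>Dm. a G * monomial x G) + (\<Sum>G\<in>Gd. a G * monomial x G)" .
    have "(2::int)^k dvd (\<Sum>G\<in>Gd. a G * monomial x G)"
      by (rule dvd_sum) (use top in \<open>auto simp: Gd_def a_def mod_eq_0_iff_dvd\<close>)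
    then obtain c where c: "(\<Sum>G\<in>Gd. a G * monomial x G) = 2^k * c" by (elim dvdE)
    have "(Q \<circ> e) x = (\<alpha> + (\<Sum>F\<in>D. coef F * monomial (e x) F)) mod 2^k"
      using Q e x by simp
    also have "\<dots> = (\<alpha> + a {} + (\<Sum>G\<in>Dm. a G * monomial x G) + 2^k * c) mod 2^k"
      unfolding eq c by (simp add: algebra_simps)
    also have "\<dots> = (\<alpha> + a {} + (\<Sum>G\<in>Dm. a G * monomial x G)) mod 2^k"
      by simp
    finally show "(Q \<circ> e) x = (\<alpha> + a {} + (\<Sum>G\<in>{G. G \<subseteq> edges m \<and> G \<noteq> {} \<and> card G \<le> d - 1}.
        a G * (\<Prod>q\<in>G. if x q then 1 else 0))) mod 2^k"
      by (simp add: Dm_def monomial_def)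
  qed
qed

lemma prod_zero_one_image:
  fixes h :: "'b \<Rightarrow> int"
  assumes "finite A" "\<And>q. h q = 0 \<or> h q = 1"
  shows "(\<Prod>p\<in>A. h (g p)) = (\<Prod>q\<in>g ` A. h q)"
  using assms(1)
proof (induction A rule: finite_induct)
  case (insert a A)
  show ?case
  proof (cases "g a \<in> g ` A")
    case True
    have "(\<Prod>q\<in>g ` A. h q) = h (g a) * (\<Prod>q\<in>g ` A - {g a}. h q)"
      using prod.remove[OF _ True] insert(1) by simp
    then have "h (g a) * (\<Prod>q\<in>g ` A. h q) = (\<Prod>q\<in>g ` A. h q)"
      using assms(2)[of "g a"] by auto
    then show ?thesis using insert True by (simp add: insert_absorb)
  next
    case False
    then show ?thesis using insert by simp
  qed
qed simp

lemma IdI_imp_edge_in_union: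
  assumes "IdI n m I x p"
  shows "p \<in> edges n" "p \<subseteq> (\<Union>i\<in>{1..m}. I i)"
proof -
  have "{q\<in>edges m. x q \<and> bq n I q p} \<noteq> {}" using assms unfolding IdI_def by fastforce
  then obtain q where "q \<in> edges m" "bq n I q p" by auto
  then show "p \<in> edges n" "p \<subseteq> (\<Union>i\<in>{1..m}. I i)" unfolding edges_def bq_def by blast+
qed

lemma hj_emb_in_cube:
  assumes "shift_ok n m I c"
  shows "hj_emb n m I c x \<in> cube n"
  using assms IdI_imp_edge_in_union(1)[of n m I x]
  by (auto simp: cube_def hj_emb_def shift_ok_def)

context wildcard_blocks
begin

lemma touched_in_edges:
  assumes p: "p \<in> edges n" "p \<subseteq> U"
  shows "touched p \<in> edges m"
proof -
  define h where "h v = (SOME i. i \<in> {1..m} \<and> v \<in> I i)" for v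
  have h: "h v \<in> {1..m} \<and> v \<in> I (h v)" if "v \<in> U" for v
    unfolding h_def by (rule someI_ex) (use that U_def in auto)
  have "touched p \<subseteq> h ` p"
  proof
    fix i assume "i \<in> touched p"
    then obtain v where v: "v \<in> p" "v \<in> I i" "i \<in> {1..m}" by (auto simp: touched_def)
    then have "h v = i" using h[of v] p I_disjoint by blast
    then show "i \<in> h ` p" using v by auto
  qed
  moreover have "finite p" using p by (auto simp: edges_def intro: finite_subset)
  ultimately have "card (touched p) \<le> card p"
    by (meson card_image_le card_mono finite_imageI le_trans)
  moreover have "touched p \<noteq> {}"
  proof -
    obtain v where "v \<in> p" using p by (auto simp: edges_def)
    then show ?thesis using h[of v] p by (auto simp: touched_def)
  qed
  ultimately show ?thesis using p by (auto simp: edges_def touched_def)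
qed

lemma bq_iff:
  assumes p: "p \<in> edges n" and q: "q \<in> edges m"
  shows "bq n I q p \<longleftrightarrow> p \<subseteq> U \<and> q = touched p"
proof
  assume b: "bq n I q p"
  have qm: "q \<subseteq> {1..m}" using q by (auto simp: edges_def)
  have "q = touched p"
  proof
    show "q \<subseteq> touched p" using b qm by (auto simp: bq_def touched_def)
    show "touched p \<subseteq> q"
    proof
      fix i assume "i \<in> touched p"
      then obtain v where v: "v \<in> p" "v \<in> I i" "i \<in> {1..m}" by (auto simp: touched_def)
      then obtain j where j: "j \<in> q" "v \<in> I j" using b by (auto simp: bq_def)
      then show "i \<in> q" using I_disjoint[of i j] v qm by blast
    qed
  qed
  moreover have "p \<subseteq> U" using b qm unfolding bq_def U_def by blast
  ultimately show "p \<subseteq> U \<and> q = touched p" by simp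
next
  assume "p \<subseteq> U \<and> q = touched p"
  then show "bq n I q p" using p unfolding bq_def U_def touched_def by blast
qed

lemma hj_emb_eq:
  assumes c: "shift_ok n m I c" and p: "p \<in> edges n"
  shows "hj_emb n m I c x p = (if p \<subseteq> U then x (touched p) else c p)"
proof -
  have "{q\<in>edges m. x q \<and> bq n I q p} = (if p \<subseteq> U \<and> x (touched p) then {touched p} else {})"
    using bq_iff[OF p] touched_in_edges[OF p] by auto
  moreover have "p \<subseteq> U \<Longrightarrow> \<not> c p" using c p by (auto simp: shift_ok_def U_def edges_def)
  ultimately show ?thesis by (auto simp: hj_emb_def IdI_def)
qed

lemma monomial_hj_emb:
  assumes c: "shift_ok n m I c" and F: "F \<subseteq> edges n"
  shows "monomial (hj_emb n m I c x) F
    = monomial c {p\<in>F. \<not> p \<subseteq> U} * monomial x (touched ` {p\<in>F. p \<subseteq> U})"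
proof -
  have fin: "finite F" using F finite_edges finite_subset by blast
  have "monomial (hj_emb n m I c x) F
      = monomial (hj_emb n m I c x) {p\<in>F. p \<subseteq> U} * monomial (hj_emb n m I c x) {p\<in>F. \<not> p \<subseteq> U}"
    unfolding monomial_def using fin by (subst prod.union_disjoint[symmetric]) (auto intro: prod.cong)
  also have "monomial (hj_emb n m I c x) {p\<in>F. \<not> p \<subseteq> U} = monomial c {p\<in>F. \<not> p \<subseteq> U}"
    unfolding monomial_def
  proof (intro prod.cong refl)
    fix p assume "p \<in> {p\<in>F. \<not> p \<subseteq> U}"
    then show "(if hj_emb n m I c x p then 1 else 0) = (if c p then 1 else 0 :: int)"
      using F hj_emb_eq[OF c, of p x] by auto
  qed
  also have "monomial (hj_emb n m I c x) {p\<in>F. p \<subseteq> U} = (\<Prod>p\<in>{p\<in>F. p \<subseteq> U}. if x (touched p) then 1 else 0)"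
    unfolding monomial_def
  proof (intro prod.cong refl)
    fix p assume "p \<in> {p\<in>F. p \<subseteq> U}"
    then show "(if hj_emb n m I c x p then 1 else 0) = (if x (touched p) then 1 else 0 :: int)"
      using F hj_emb_eq[OF c, of p x] by auto
  qed
  also have "\<dots> = monomial x (touched ` {p\<in>F. p \<subseteq> U})"
    unfolding monomial_def using fin by (intro prod_zero_one_image) auto
  finally show ?thesis by (simp add: mult.commute)
qed

end

context wildcard_blocks
begin

lemma card_touched_le: "finite F \<Longrightarrow> card (touched ` {p\<in>F. p \<subseteq> U}) \<le> card F"
  using card_image_le[of "{p\<in>F. p \<subseteq> U}" touched] card_mono[of F "{p\<in>F. p \<subseteq> U}"] by auto

lemma touched_preimage_eq_box:
  assumes "0 < d" "card G = d"
  shows "{F\<in>{F. F \<subseteq> edges n \<and> F \<noteq> {} \<and> card F \<le> d}. touched ` {p\<in>F. p \<subseteq> U} = G} = box G"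
proof
  show "{F\<in>{F. F \<subseteq> edges n \<and> F \<noteq> {} \<and> card F \<le> d}. touched ` {p\<in>F. p \<subseteq> U} = G} \<subseteq> box G"
  proof
    fix F assume "F \<in> {F\<in>{F. F \<subseteq> edges n \<and> F \<noteq> {} \<and> card F \<le> d}. touched ` {p\<in>F. p \<subseteq> U} = G}"
    then have F: "F \<subseteq> edges n" "card F \<le> d" "touched ` {p\<in>F. p \<subseteq> U} = G" by auto
    have fin: "finite F" using F(1) finite_edges finite_subset by blast
    have sub: "{p\<in>F. p \<subseteq> U} \<subseteq> F" by blast
    have "d \<le> card {p\<in>F. p \<subseteq> U}"
      using assms(2) F(3) card_image_le[of "{p\<in>F. p \<subseteq> U}" touched] fin by auto
    then have "card {p\<in>F. p \<subseteq> U} = card F" "card F = d"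
      using F(2) card_mono[OF fin sub] by linarith+
    then have "{p\<in>F. p \<subseteq> U} = F" "card F = d" using card_subset_eq[OF fin sub] by simp_all
    then show "F \<in> box G" using F unfolding box_def by auto
  qed
  show "box G \<subseteq> {F\<in>{F. F \<subseteq> edges n \<and> F \<noteq> {} \<and> card F \<le> d}. touched ` {p\<in>F. p \<subseteq> U} = G}"
  proof
    fix F assume F: "F \<in> box G"
    then have "{p\<in>F. p \<subseteq> U} = F" by (auto simp: box_def)
    moreover have "F \<noteq> {}" using F \<open>0 < d\<close> by (auto simp: box_def)
    ultimately show "F \<in> {F\<in>{F. F \<subseteq> edges n \<and> F \<noteq> {} \<and> card F \<le> d}. touched ` {p\<in>F. p \<subseteq> U} = G}"
      using F by (auto simp: box_def)
  qed
qed

lemma kpoly_le_comp_hj_emb: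
  assumes "0 < d" and c: "shift_ok n m I c"
    and Q: "\<And>y. y \<in> cube n \<Longrightarrow>
      Q y = (\<alpha> + (\<Sum>F\<in>{F. F \<subseteq> edges n \<and> F \<noteq> {} \<and> card F \<le> d}. coef F * monomial y F)) mod 2^k"
  shows "kpoly_le k m (d - 1) (Q \<circ> hj_emb n m I c)"
proof (rule kpoly_le_comp_substitution[OF \<open>0 < d\<close> Q hj_emb_in_cube[OF c]])
  define D where "D = {F. F \<subseteq> edges n \<and> F \<noteq> {} \<and> card F \<le> d}"
  show "touched ` {p\<in>F. p \<subseteq> U} \<subseteq> edges m \<and> card (touched ` {p\<in>F. p \<subseteq> U}) \<le> d"
    if "F \<in> D" for F
  proof
    show "touched ` {p\<in>F. p \<subseteq> U} \<subseteq> edges m" using that touched_in_edges by (auto simp: D_def)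
    have "finite F" using that finite_edges finite_subset by (auto simp: D_def)
    then have "card (touched ` {p\<in>F. p \<subseteq> U}) \<le> card F" by (rule card_touched_le)
    then show "card (touched ` {p\<in>F. p \<subseteq> U}) \<le> d" using that by (simp add: D_def)
  qed
  show "monomial (hj_emb n m I c x) F
      = monomial c {p\<in>F. \<not> p \<subseteq> U} * monomial x (touched ` {p\<in>F. p \<subseteq> U})"
    if "F \<in> D" for F x
    using monomial_hj_emb[OF c] that by (simp add: D_def)
  show "(\<Sum>F\<in>{F\<in>D. touched ` {p\<in>F. p \<subseteq> U} = G}. coef F * monomial c {p\<in>F. \<not> p \<subseteq> U}) mod 2^k = 0"
    if G: "G \<subseteq> edges m" "card G = d" for G
  proof -
    have "monomial c {p\<in>F. \<not> p \<subseteq> U} = 1" if "F \<in> box G" for F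
    proof -
      have "{p\<in>F. \<not> p \<subseteq> U} = {}" using that by (auto simp: box_def)
      then show ?thesis unfolding monomial_def by (metis prod.empty)
    qed
    then have "(\<Sum>F\<in>{F\<in>D. touched ` {p\<in>F. p \<subseteq> U} = G}. coef F * monomial c {p\<in>F. \<not> p \<subseteq> U})
        = (\<Sum>F\<in>box G. coef F)"
      unfolding D_def touched_preimage_eq_box[OF \<open>0 < d\<close> G(2)] by simp
    moreover obtain q where "q \<in> G" using G \<open>0 < d\<close> by fastforce
    moreover obtain i0 where "i0 \<in> q" "i0 \<in> {1..m}"
      using \<open>q \<in> G\<close> G(1) by (force simp: edges_def)
    ultimately show ?thesis by (simp add: box_sum_mod_eq_0)
  qed
qed

end

lemma finite_cube: "finite (cube n)"
proof -
  have "inj_on (\<lambda>y. {p. y p}) (cube n)" by (auto simp: inj_on_def fun_eq_iff)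
  moreover have "(\<lambda>y. {p. y p}) ` cube n \<subseteq> Pow (edges n)" by (auto simp: cube_def)
  ultimately show ?thesis using finite_edges by (meson finite_Pow_iff finite_imageD finite_subset)
qed

lemma card_cube_pos: "card (cube n) > 0"
proof -
  have "(\<lambda>_. False) \<in> cube n" by (simp add: cube_def)
  then show ?thesis using finite_cube card_gt_0_iff by blast
qed

lemma cube_empty: "y \<in> cube n \<Longrightarrow> \<not> y {}"
  by (auto simp: cube_def edges_def)

lemma card_le_card_image_mult:
  assumes "finite A" "\<And>z. card {y\<in>A. f y = z} \<le> K"
  shows "card A \<le> card (f ` A) * K"
proof -
  have "card A \<le> card (\<Union>z\<in>f ` A. {y\<in>A. f y = z})"
    by (rule card_mono) (use assms(1) in auto)
  also have "\<dots> \<le> (\<Sum>z\<in>f ` A. card {y\<in>A. f y = z})"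
    by (rule card_UN_le) (use assms(1) in simp)
  also have "\<dots> \<le> (\<Sum>z\<in>f ` A. K)" by (rule sum_mono) (use assms(2) in simp)
  finally show ?thesis by simp
qed

lemma card_cube_agree_outside:
  assumes "finite X"
  shows "card {y\<in>cube n. \<forall>p. \<not> p \<subseteq> X \<longrightarrow> y p = z p} \<le> 2 ^ 2 ^ card X"
proof -
  define E where "E = {p\<in>edges n. p \<subseteq> X}"
  have finE: "finite E" using finite_edges by (simp add: E_def)
  have "card E \<le> card (Pow X)" by (rule card_mono) (use assms in \<open>auto simp: E_def\<close>)
  then have cardE: "card E \<le> 2 ^ card X" using assms by (simp add: card_Pow)
  have "inj_on (\<lambda>y. {p\<in>E. y p}) {y\<in>cube n. \<forall>p. \<not> p \<subseteq> X \<longrightarrow> y p = z p}"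
  proof (rule inj_onI)
    fix y y' assume y: "y \<in> {y\<in>cube n. \<forall>p. \<not> p \<subseteq> X \<longrightarrow> y p = z p}"
      and y': "y' \<in> {y\<in>cube n. \<forall>p. \<not> p \<subseteq> X \<longrightarrow> y p = z p}" and eq: "{p\<in>E. y p} = {p\<in>E. y' p}"
    show "y = y'"
    proof
      fix p
      show "y p = y' p"
      proof (cases "p \<in> E")
        case True then show ?thesis using eq by blast
      next
        case False
        show ?thesis
        proof (cases "p \<subseteq> X")
          case True
          then have "p \<notin> edges n" using False by (simp add: E_def)
          then show ?thesis using y y' by (auto simp: cube_def)
        next
          case False
          then show ?thesis using y y' by simp
        qed
      qed
    qed
  qed
  moreover have "(\<lambda>y. {p\<in>E. y p}) ` {y\<in>cube n. \<forall>p. \<not> p \<subseteq> X \<longrightarrow> y p = z p} \<subseteq> Pow E" by auto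
  ultimately have "card {y\<in>cube n. \<forall>p. \<not> p \<subseteq> X \<longrightarrow> y p = z p} \<le> card (Pow E)"
    using finE by (meson card_inj_on_le finite_Pow_iff)
  also have "\<dots> \<le> 2 ^ 2 ^ card X" using finE cardE by (simp add: card_Pow power_increasing)
  finally show ?thesis .
qed

context
  fixes n m :: nat and J :: "nat \<Rightarrow> nat \<Rightarrow> nat set"
begin

definition "wild t = (\<Union>i\<in>{1..m}. J t i)"

definition "outer_shift t y = (\<lambda>p. y p \<and> \<not> p \<subseteq> wild t)"

definition "fits t y \<longleftrightarrow> y \<in> hj_space n m (J t) (outer_shift t y)"

definition "unfitted j = {y\<in>cube n. \<forall>t<j. \<not> fits t y}"

definition "first_fit_spaces T =
  {(J t, outer_shift t y) | t y. y \<in> cube n \<and> t < T \<and> fits t y \<and> (\<forall>t'<t. \<not> fits t' y)}"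

lemma shift_ok_outer_shift: "y \<in> cube n \<Longrightarrow> shift_ok n m (J t) (outer_shift t y)"
  by (auto simp: shift_ok_def outer_shift_def cube_def wild_def)

lemma hj_emb_outside: "\<not> p \<subseteq> wild t \<Longrightarrow> hj_emb n m (J t) c x p = c p"
  using IdI_imp_edge_in_union(2)[of n m "J t" x p] by (auto simp: hj_emb_def wild_def)

lemma hj_emb_inside: "p \<subseteq> wild t \<Longrightarrow> hj_emb n m (J t) (outer_shift t y) x p = IdI n m (J t) x p"
  by (auto simp: hj_emb_def outer_shift_def)

lemma fits_iff:
  assumes "y \<in> cube n"
  shows "fits t y \<longleftrightarrow> (\<exists>x\<in>cube m. \<forall>p. p \<subseteq> wild t \<longrightarrow> y p = IdI n m (J t) x p)"
proof
  assume "fits t y"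
  then obtain x where "x \<in> cube m" "y = hj_emb n m (J t) (outer_shift t y) x"
    by (auto simp: fits_def hj_space_def)
  then show "\<exists>x\<in>cube m. \<forall>p. p \<subseteq> wild t \<longrightarrow> y p = IdI n m (J t) x p" using hj_emb_inside by metis
next
  assume "\<exists>x\<in>cube m. \<forall>p. p \<subseteq> wild t \<longrightarrow> y p = IdI n m (J t) x p"
  then obtain x where x: "x \<in> cube m" "\<forall>p. p \<subseteq> wild t \<longrightarrow> y p = IdI n m (J t) x p" by blast
  have "y = hj_emb n m (J t) (outer_shift t y) x"
  proof
    fix p
    show "y p = hj_emb n m (J t) (outer_shift t y) x p"
      using x(2) hj_emb_inside[of p t y x] hj_emb_outside[of p t "outer_shift t y" x]
      by (cases "p \<subseteq> wild t") (auto simp: outer_shift_def)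
  qed
  then show "fits t y" using x(1) by (auto simp: fits_def hj_space_def)
qed

lemma fits_cong:
  assumes "y \<in> cube n" "y' \<in> cube n" "\<forall>p. p \<subseteq> wild t \<longrightarrow> y p = y' p"
  shows "fits t y \<longleftrightarrow> fits t y'"
  using assms fits_iff by simp

lemma fits_if_vanishing:
  assumes "y \<in> cube n" "\<forall>p. p \<subseteq> wild t \<longrightarrow> \<not> y p"
  shows "fits t y"
proof -
  have "\<not> IdI n m (J t) (\<lambda>_. False) p" for p by (simp add: IdI_def)
  moreover have "(\<lambda>_. False) \<in> cube m" by (simp add: cube_def)
  ultimately show ?thesis using assms fits_iff[of y t] by auto
qed

lemma hj_space_outer_shift:
  assumes y: "y \<in> cube n" and z: "z \<in> hj_space n m (J t) (outer_shift t y)"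
  shows "z \<in> cube n" "\<forall>p. \<not> p \<subseteq> wild t \<longrightarrow> z p = y p" "fits t z"
    "outer_shift t z = outer_shift t y"
proof -
  obtain x where x: "x \<in> cube m" "z = hj_emb n m (J t) (outer_shift t y) x"
    using z by (auto simp: hj_space_def)
  show z_cube: "z \<in> cube n" using hj_emb_in_cube[OF shift_ok_outer_shift[OF y]] x(2) by simp
  show outside: "\<forall>p. \<not> p \<subseteq> wild t \<longrightarrow> z p = y p"
    using x hj_emb_outside by (auto simp: outer_shift_def)
  show "fits t z" using fits_iff[OF z_cube] x hj_emb_inside by metis
  show "outer_shift t z = outer_shift t y" using outside by (auto simp: outer_shift_def fun_eq_iff)
qed

lemma agree_on_other_wild:
  assumes "y \<in> cube n" "z \<in> cube n" "\<forall>p. \<not> p \<subseteq> wild t \<longrightarrow> z p = y p" "wild t' \<inter> wild t = {}"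
  shows "fits t' z \<longleftrightarrow> fits t' y"
proof (rule fits_cong[OF assms(2,1)], intro allI impI)
  fix p assume p: "p \<subseteq> wild t'"
  show "z p = y p"
  proof (cases "p = {}")
    case True then show ?thesis using cube_empty[OF assms(1)] cube_empty[OF assms(2)] by simp
  next
    case False
    then have "\<not> p \<subseteq> wild t" using p assms(4) by blast
    then show ?thesis using assms(3) by simp
  qed
qed

lemma unfitted_Suc: "unfitted (Suc j) = unfitted j - {y. fits j y}"
  by (auto simp: unfitted_def less_Suc_eq)

lemma outer_shift_unfitted:
  assumes disj: "\<And>t. t < j \<Longrightarrow> wild t \<inter> wild j = {}" and y: "y \<in> unfitted j"
  shows "outer_shift j y \<in> unfitted j" "fits j (outer_shift j y)"
proof -
  have y_cube: "y \<in> cube n" using y by (simp add: unfitted_def)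
  have z_cube: "outer_shift j y \<in> cube n" using y_cube by (auto simp: cube_def outer_shift_def)
  have outside: "\<forall>p. \<not> p \<subseteq> wild j \<longrightarrow> outer_shift j y p = y p" by (simp add: outer_shift_def)
  have "\<not> fits t (outer_shift j y)" if "t < j" for t
    using agree_on_other_wild[OF y_cube z_cube outside disj[OF that]] y that
    by (simp add: unfitted_def)
  then show "outer_shift j y \<in> unfitted j" using z_cube by (simp add: unfitted_def)
  show "fits j (outer_shift j y)"
    using fits_if_vanishing[OF z_cube] by (simp add: outer_shift_def)
qed

lemma card_outer_shift_fibre:
  assumes "finite (wild j)"
  shows "card {y\<in>unfitted j. outer_shift j y = z} \<le> 2^2^card (wild j)"
proof -
  have "{y\<in>unfitted j. outer_shift j y = z} \<subseteq> {y\<in>cube n. \<forall>p. \<not> p \<subseteq> wild j \<longrightarrow> y p = z p}"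
    by (auto simp: unfitted_def outer_shift_def)
  then have "card {y\<in>unfitted j. outer_shift j y = z}
      \<le> card {y\<in>cube n. \<forall>p. \<not> p \<subseteq> wild j \<longrightarrow> y p = z p}"
    by (rule card_mono[OF finite_subset[OF _ finite_cube], rotated]) auto
  also have "\<dots> \<le> 2^2^card (wild j)" by (rule card_cube_agree_outside[OF assms])
  finally show ?thesis .
qed

text \<open>\<open>outer_shift j\<close> maps \<open>unfitted j\<close> into its points fitting \<open>j\<close> with fibres of size
  at most \<open>2^2^L\<close>, so at least a \<open>2^-2^L\<close> fraction of \<open>unfitted j\<close> fits \<open>j\<close>.\<close>
lemma card_unfitted_Suc:
  assumes disj: "\<And>t. t < j \<Longrightarrow> wild t \<inter> wild j = {}"
    and fin: "finite (wild j)" and L: "card (wild j) \<le> L"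
  shows "real (card (unfitted (Suc j))) \<le> (1 - 1 / 2^2^L) * real (card (unfitted j))"
proof -
  define A where "A = unfitted j"
  define A_fit where "A_fit = A \<inter> {y. fits j y}"
  have finA: "finite A" using finite_cube by (simp add: A_def unfitted_def)
  have "card {y\<in>A. outer_shift j y = z} \<le> 2^2^L" for z
    using card_outer_shift_fibre[OF fin, of z] L unfolding A_def
    by (meson le_trans one_le_numeral power_increasing)
  then have "card A \<le> card (outer_shift j ` A) * 2^2^L"
    by (rule card_le_card_image_mult[OF finA])
  also have "\<dots> \<le> card A_fit * 2^2^L"
    using outer_shift_unfitted[OF disj] finA
    by (intro mult_right_mono card_mono) (auto simp: A_fit_def A_def)
  finally have "real (card A) \<le> real (card A_fit * 2^2^L)"
    by (simp only: of_nat_le_iff)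
  then have "real (card A) / 2^2^L \<le> real (card A_fit)"
    by (simp add: divide_le_eq)
  moreover have "card (unfitted (Suc j)) = card A - card A_fit"
    unfolding unfitted_Suc A_fit_def A_def by (rule card_Diff_subset_Int) (use finA A_def in simp)
  moreover have "card A_fit \<le> card A" using finA by (auto simp: A_fit_def intro: card_mono)
  ultimately show ?thesis by (simp add: A_def algebra_simps)
qed

lemma card_unfitted:
  assumes disj: "\<And>t t'. t < T \<Longrightarrow> t' < T \<Longrightarrow> t \<noteq> t' \<Longrightarrow> wild t \<inter> wild t' = {}"
    and fin: "\<And>t. t < T \<Longrightarrow> finite (wild t) \<and> card (wild t) \<le> L"
  shows "j \<le> T \<Longrightarrow> real (card (unfitted j)) \<le> (1 - 1 / 2^2^L)^j * real (card (cube n))"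
proof (induction j)
  case 0 then show ?case by (simp add: unfitted_def)
next
  case (Suc j)
  have "real (card (unfitted (Suc j))) \<le> (1 - 1 / 2^2^L) * real (card (unfitted j))"
    by (rule card_unfitted_Suc) (use Suc.prems disj fin in auto)
  also have "\<dots> \<le> (1 - 1 / 2^2^L) * ((1 - 1 / 2^2^L)^j * real (card (cube n)))"
    by (rule mult_left_mono) (use Suc in \<open>auto simp: field_simps\<close>)
  finally show ?case by simp
qed

lemma first_fit_transfer:
  assumes y: "y \<in> cube n" "\<forall>t'<t. \<not> fits t' y"
    and z: "z \<in> hj_space n m (J t) (outer_shift t y)"
    and disj: "\<And>t'. t' < t \<Longrightarrow> wild t' \<inter> wild t = {}"
  shows "\<forall>t'<t. \<not> fits t' z" "fits t z" "outer_shift t z = outer_shift t y"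
proof -
  note z_props = hj_space_outer_shift[OF y(1) z]
  show "fits t z" "outer_shift t z = outer_shift t y" using z_props(3,4) .
  show "\<forall>t'<t. \<not> fits t' z"
    using agree_on_other_wild[OF y(1) z_props(1,2) disj] y(2) by blast
qed

lemma first_fit_spaces_disjoint:
  assumes disj: "\<And>t t'. t < T \<Longrightarrow> t' < T \<Longrightarrow> t \<noteq> t' \<Longrightarrow> wild t \<inter> wild t' = {}"
    and v: "v \<in> first_fit_spaces T" and w: "w \<in> first_fit_spaces T" and "v \<noteq> w"
  shows "hj_space n m (fst v) (snd v) \<inter> hj_space n m (fst w) (snd w) = {}"
proof (rule ccontr)
  obtain t y where ty: "v = (J t, outer_shift t y)" "y \<in> cube n" "t < T" "\<forall>t'<t. \<not> fits t' y"
    using v by (auto simp: first_fit_spaces_def)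
  obtain t2 y2 where ty2: "w = (J t2, outer_shift t2 y2)" "y2 \<in> cube n" "t2 < T" "\<forall>t'<t2. \<not> fits t' y2"
    using w by (auto simp: first_fit_spaces_def)
  assume "hj_space n m (fst v) (snd v) \<inter> hj_space n m (fst w) (snd w) \<noteq> {}"
  then obtain z where z1: "z \<in> hj_space n m (J t) (outer_shift t y)"
    and z2: "z \<in> hj_space n m (J t2) (outer_shift t2 y2)"
    using ty(1) ty2(1) by auto
  have "wild t' \<inter> wild t = {}" if "t' < t" for t'
    using disj[of t' t] ty(3) that by simp
  note T1 = first_fit_transfer[OF ty(2,4) z1 this]
  have "wild t' \<inter> wild t2 = {}" if "t' < t2" for t'
    using disj[of t' t2] ty2(3) that by simp
  note T2 = first_fit_transfer[OF ty2(2,4) z2 this]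
  have "\<not> t < t2" "\<not> t2 < t" using T1(1,2) T2(1,2) by blast+
  then have "t = t2" by simp
  then have "v = w" using ty(1) ty2(1) T1(3) T2(3) by simp
  with \<open>v \<noteq> w\<close> show False by simp
qed

lemma cube_diff_first_fit_spaces:
  "cube n - (\<Union>(I, c)\<in>first_fit_spaces T. hj_space n m I c) \<subseteq> unfitted T"
proof
  fix y assume y: "y \<in> cube n - (\<Union>(I, c)\<in>first_fit_spaces T. hj_space n m I c)"
  show "y \<in> unfitted T"
  proof (rule ccontr)
    assume "y \<notin> unfitted T"
    then have ex: "\<exists>t. t < T \<and> fits t y" using y by (auto simp: unfitted_def)
    define t0 where "t0 = (LEAST t. t < T \<and> fits t y)"
    have t0: "t0 < T" "fits t0 y" using LeastI_ex[OF ex] by (simp_all add: t0_def)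
    have "\<not> fits t y" if "t < t0" for t
      using not_less_Least[OF that[unfolded t0_def]] that t0(1) by auto
    then have "(J t0, outer_shift t0 y) \<in> first_fit_spaces T"
      using y t0 by (auto simp: first_fit_spaces_def)
    moreover have "y \<in> hj_space n m (J t0) (outer_shift t0 y)" using t0(2) by (simp add: fits_def)
    ultimately show False using y by blast
  qed
qed

end

lemma two_pow_dvd_choose:
  assumes "1 \<le> r" "r \<le> q"
  shows "(2::int)^k dvd int ((2^k * fact q) choose r)"
proof -
  define s :: nat where "s = 2^k * fact q"
  obtain c where c: "fact q = r * c" using dvd_fact[of r q] assms by blast
  obtain r' where r': "r = Suc r'" using assms(1) by (cases r) auto
  obtain s' where s': "s = Suc s'" by (cases s) (auto simp: s_def)
  have "r * (s choose r) = s * ((s - 1) choose (r - 1))"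
    using Suc_times_binomial_eq[of s' r'] r' s' by (simp add: mult.commute)
  also have "\<dots> = r * (2^k * c * ((s - 1) choose (r - 1)))"
    unfolding s_def c by (simp add: algebra_simps)
  finally have "s choose r = 2^k * (c * ((s - 1) choose (r - 1)))"
    using assms(1) by simp
  then show ?thesis unfolding s_def by (metis dvd_triv_left of_nat_mult of_nat_numeral of_nat_power)
qed

definition segment :: "nat set \<Rightarrow> nat \<Rightarrow> nat \<Rightarrow> nat set" where
  "segment S s b = (!) (sorted_list_of_set S) ` {b*s ..< b*s + s}"

lemma
  assumes "finite S" "b*s + s \<le> card S"
  shows card_segment: "card (segment S s b) = s"
    and segment_subset: "segment S s b \<subseteq> S"
proof -
  have "strict_mono_on {..<card S} ((!) (sorted_list_of_set S))"
    using assms(1) by (intro strict_mono_onI) (simp add: sorted_wrt_nth_less)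
  then have "inj_on ((!) (sorted_list_of_set S)) {b*s ..< b*s + s}"
    by (rule inj_on_subset[OF strict_mono_on_imp_inj_on]) (use assms(2) in auto)
  then show "card (segment S s b) = s" by (simp add: segment_def card_image)
  show "segment S s b \<subseteq> S"
  proof
    fix x assume "x \<in> segment S s b"
    then obtain j where "j < b*s + s" "x = sorted_list_of_set S ! j"
      by (auto simp: segment_def)
    then have "j < card S" "x = sorted_list_of_set S ! j" using assms(2) by simp_all
    then show "x \<in> S" using assms(1) by (metis length_sorted_list_of_set nth_mem set_sorted_list_of_set)
  qed
qed

lemma segment_less:
  assumes "finite S" "b < b'" "b'*s + s \<le> card S" "x \<in> segment S s b" "y \<in> segment S s b'"
  shows "x < y"
proof -
  obtain i j where ij: "i < b*s + s" "b'*s \<le> j" "j < b'*s + s"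
    "x = sorted_list_of_set S ! i" "y = sorted_list_of_set S ! j"
    using assms(4,5) by (auto simp: segment_def)
  have "b*s + s \<le> b'*s" using assms(2) by (metis add.commute mult_Suc mult_le_mono1 Suc_leI)
  then show ?thesis
    using ij assms(1,3) by (simp add: sorted_wrt_nth_less)
qed

context wildcard_blocks
begin

lemma finite_wildcard_union: "finite (\<Union>i\<in>{1..m}. I i)"
  using finite_I by blast

lemma card_wildcard_union: "card (\<Union>i\<in>{1..m}. I i) \<le> m * s"
proof -
  have "card (\<Union>i\<in>{1..m}. I i) \<le> (\<Sum>i\<in>{1..m}. card (I i))" by (rule card_UN_le) simp
  also have "\<dots> = m * s" using card_I by simp
  finally show ?thesis .
qed

lemma wildcards_block:
  assumes "0 < m" "m \<le> n" "0 < s"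
  shows "wildcards n m I" "block m I"
proof -
  have ne: "I i \<noteq> {}" if "i \<in> {1..m}" for i using card_I[OF that] assms(3) by auto
  have less: "Max (I i) < Min (I (Suc i)) \<and> Min (I i) < Min (I (Suc i))" if "i \<in> {1..<m}" for i
  proof -
    have i: "i \<in> {1..m}" "Suc i \<in> {1..m}" using that by auto
    have "Max (I i) \<in> I i" "Min (I i) \<in> I i" "Min (I (Suc i)) \<in> I (Suc i)"
      using ne i finite_I by simp_all
    then show ?thesis using I_less[OF i] by blast
  qed
  show "wildcards n m I"
    unfolding wildcards_def using assms ne I_subset S_subset I_disjoint less by fastforce
  show "block m I" unfolding block_def using less by blast
qed

end

definition segment_family :: "nat set \<Rightarrow> nat \<Rightarrow> nat \<Rightarrow> nat \<Rightarrow> nat \<Rightarrow> nat set" where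
  "segment_family S s m t i = segment S s (t*m + i - 1)"

lemma segment_index_bounds:
  fixes t m s i :: nat
  assumes "i \<in> {1..m}"
  shows "t*(m*s) \<le> (t*m + i - 1)*s" "(t*m + i - 1)*s + s \<le> t*(m*s) + m*s"
proof -
  obtain i' where i': "i = Suc i'" "Suc i' \<le> m" using assms by (cases i) auto
  show "t*(m*s) \<le> (t*m + i - 1)*s" using i' by (simp add: algebra_simps)
  have "i'*s + s \<le> m*s" using mult_le_mono1[OF i'(2), of s] by simp
  then show "(t*m + i - 1)*s + s \<le> t*(m*s) + m*s" using i' by (simp add: algebra_simps)
qed

lemma segment_family_index_le:
  fixes t m s i :: nat
  assumes "t < T" "i \<in> {1..m}"
  shows "(t*m + i - 1)*s + s \<le> T*(m*s)"
proof -
  have "t*(m*s) + m*s \<le> T*(m*s)" using assms(1) mult_le_mono1[of "Suc t" T "m*s"] by simp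
  then show ?thesis using segment_index_bounds(2)[OF assms(2), of t s] by linarith
qed

lemma wild_segment_family_subset: "wild m (segment_family S s m) t \<subseteq> segment S (m*s) t"
proof
  fix x assume "x \<in> wild m (segment_family S s m) t"
  then obtain i where i: "i \<in> {1..m}" "x \<in> segment S s (t*m + i - 1)"
    by (auto simp: wild_def segment_family_def)
  then obtain j where j: "(t*m + i - 1)*s \<le> j" "j < (t*m + i - 1)*s + s" "x = sorted_list_of_set S ! j"
    by (auto simp: segment_def)
  moreover note segment_index_bounds[OF i(1), of t s]
  ultimately have "j \<in> {t*(m*s) ..< t*(m*s) + m*s}" by (simp only: atLeastLessThan_iff) linarith
  then show "x \<in> segment S (m*s) t" using j(3) by (simp add: segment_def)
qed

lemma wildcard_blocks_segment_family:
  assumes S: "S \<subseteq> {1..n}" "card S = T * (m * s)"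
    and inv: "coef_order_invariant k (2*d) S coef"
    and dvd: "\<And>r. 1 \<le> r \<Longrightarrow> r \<le> 2*d \<Longrightarrow> (2::int)^k dvd int (s choose r)"
    and "t < T"
  shows "wildcard_blocks n m d k s (segment_family S s m t) S coef"
proof
  have finS: "finite S" using S(1) finite_subset by blast
  have fits: "(t*m + i - 1)*s + s \<le> card S" if "i \<in> {1..m}" for i
    using segment_family_index_le[OF \<open>t < T\<close> that] S(2) by simp
  show "card (segment_family S s m t i) = s" if "i \<in> {1..m}" for i
    using card_segment[OF finS fits[OF that]] by (simp add: segment_family_def)
  show "segment_family S s m t i \<subseteq> S" if "i \<in> {1..m}" for i
    using segment_subset[OF finS fits[OF that]] by (simp add: segment_family_def)
  show "a < b" if "i \<in> {1..m}" "j \<in> {1..m}" "i < j" "a \<in> segment_family S s m t i"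
    "b \<in> segment_family S s m t j" for i j a b
  proof (rule segment_less[OF finS _ fits[OF that(2)]])
    have "1 \<le> i" using that(1) by simp
    then show "t*m + i - 1 < t*m + j - 1" using that(3) by linarith
  qed (use that(4,5) in \<open>simp_all add: segment_family_def\<close>)
qed (use S inv dvd in auto)

lemma wild_segment_family_disjoint:
  assumes S: "S \<subseteq> {1..n}" "card S = T * (m * s)" and "t < T" "t' < T" "t \<noteq> t'"
  shows "wild m (segment_family S s m) t \<inter> wild m (segment_family S s m) t' = {}"
proof -
  have finS: "finite S" using S(1) finite_subset by blast
  have less: "x < y" if "u < u'" "u' < T" "x \<in> segment S (m*s) u" "y \<in> segment S (m*s) u'"
    for u u' x y
    using segment_less[OF finS that(1) _ that(3,4)] that(2) S(2) mult_le_mono1[of "Suc u'" T "m*s"]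
    by simp
  have "x \<noteq> y" if "x \<in> segment S (m*s) t" "y \<in> segment S (m*s) t'" for x y
  proof (cases "t < t'")
    case True then show ?thesis using less[OF True \<open>t' < T\<close> that] by simp
  next
    case False
    then have "t' < t" using \<open>t \<noteq> t'\<close> by simp
    then show ?thesis using less[OF _ \<open>t < T\<close> that(2,1)] by simp
  qed
  then show ?thesis using wild_segment_family_subset[of m S s t] wild_segment_family_subset[of m S s t'] by blast
qed

lemma kdeg_less:
  assumes "kpoly_le k m (d - 1) P" "0 < d"
  shows "kdeg k m P < d"
proof -
  have "kdeg k m P \<le> d - 1" unfolding kdeg_def using assms(1) by (rule Least_le)
  then show ?thesis using assms(2) by simp
qed

lemma first_fit_cover:
  fixes J :: "nat \<Rightarrow> nat \<Rightarrow> nat set"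
  assumes "0 < d" "0 < m" "m \<le> n" "0 < s"
    and blocks: "\<And>t. t < T \<Longrightarrow> wildcard_blocks n m d k s (J t) S coef"
    and disj: "\<And>t t'. t < T \<Longrightarrow> t' < T \<Longrightarrow> t \<noteq> t' \<Longrightarrow> wild m J t \<inter> wild m J t' = {}"
    and Q: "\<And>y. y \<in> cube n \<Longrightarrow>
      Q y = (\<alpha> + (\<Sum>F\<in>{F. F \<subseteq> edges n \<and> F \<noteq> {} \<and> card F \<le> d}. coef F * monomial y F)) mod 2^k"
  defines "V \<equiv> first_fit_spaces n m J T"
  shows "\<forall>(I, c)\<in>V. wildcards n m I \<and> block m I \<and> shift_ok n m I c"
    and "\<forall>v\<in>V. \<forall>w\<in>V. v \<noteq> w \<longrightarrow> hj_space n m (fst v) (snd v) \<inter> hj_space n m (fst w) (snd w) = {}"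
    and "real (card (cube n - (\<Union>(I, c)\<in>V. hj_space n m I c))) / real (card (cube n))
      \<le> (1 - 1 / 2^2^(m*s))^T"
    and "\<forall>(I, c)\<in>V. kpoly_le k m (d - 1) (Q \<circ> hj_emb n m I c)"
proof -
  have member: "\<exists>t y. t < T \<and> y \<in> cube n \<and> I = J t \<and> c = outer_shift m J t y"
    if "(I, c) \<in> V" for I c
    using that by (auto simp: V_def first_fit_spaces_def)
  have "wildcards n m I \<and> block m I \<and> shift_ok n m I c" if Ic: "(I, c) \<in> V" for I c
  proof -
    obtain t y where "t < T" "y \<in> cube n" "I = J t" "c = outer_shift m J t y"
      using member[OF Ic] by blast
    then show ?thesis
      using wildcard_blocks.wildcards_block[OF blocks \<open>0 < m\<close> \<open>m \<le> n\<close> \<open>0 < s\<close>]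
        shift_ok_outer_shift by simp
  qed
  then show "\<forall>(I, c)\<in>V. wildcards n m I \<and> block m I \<and> shift_ok n m I c" by fast
  show "\<forall>v\<in>V. \<forall>w\<in>V. v \<noteq> w \<longrightarrow> hj_space n m (fst v) (snd v) \<inter> hj_space n m (fst w) (snd w) = {}"
    using first_fit_spaces_disjoint[OF disj] unfolding V_def by blast
  have "card (cube n - (\<Union>(I, c)\<in>V. hj_space n m I c)) \<le> card (unfitted n m J T)"
    unfolding V_def
    by (rule card_mono[OF _ cube_diff_first_fit_spaces]) (simp add: unfitted_def finite_cube)
  also have "real (card (unfitted n m J T)) \<le> (1 - 1 / 2^2^(m*s))^T * real (card (cube n))"
    using card_unfitted[OF disj] wildcard_blocks.finite_wildcard_union[OF blocks] wildcard_blocks.card_wildcard_union[OF blocks]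
    by (simp add: wild_def)
  finally show "real (card (cube n - (\<Union>(I, c)\<in>V. hj_space n m I c))) / real (card (cube n))
      \<le> (1 - 1 / 2^2^(m*s))^T"
    using card_cube_pos[of n] by (simp add: divide_le_eq)
  have "kpoly_le k m (d - 1) (Q \<circ> hj_emb n m I c)" if Ic: "(I, c) \<in> V" for I c
  proof -
    obtain t y where "t < T" "y \<in> cube n" "I = J t" "c = outer_shift m J t y"
      using member[OF Ic] by blast
    then show ?thesis
      using wildcard_blocks.kpoly_le_comp_hj_emb[OF blocks \<open>0 < d\<close> shift_ok_outer_shift Q] by simp
  qed
  then show "\<forall>(I, c)\<in>V. kpoly_le k m (d - 1) (Q \<circ> hj_emb n m I c)" by fast
qed

lemma kpoly_monomial_representation:
  assumes "kpoly k n Q" "kdeg k n Q = d"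
  shows "\<exists>\<alpha> coef. \<forall>y\<in>cube n.
    Q y = (\<alpha> + (\<Sum>F\<in>{F. F \<subseteq> edges n \<and> F \<noteq> {} \<and> card F \<le> d}. coef F * monomial y F)) mod 2^k"
proof -
  have "kpoly_le k n d Q" using assms unfolding kpoly_def kdeg_def by (metis LeastI_ex)
  then show ?thesis unfolding kpoly_le_def monomial_def .
qed

lemma hj_cover_of_invariant_set:
  assumes "0 < d" "0 < m" "m \<le> n" and s: "s = 2^k * fact (2*d)"
    and S: "S \<subseteq> {1..n}" "card S = T * (m * s)" "coef_order_invariant k (2*d) S coef"
    and Q: "\<And>y. y \<in> cube n \<Longrightarrow>
      Q y = (\<alpha> + (\<Sum>F\<in>{F. F \<subseteq> edges n \<and> F \<noteq> {} \<and> card F \<le> d}. coef F * monomial y F)) mod 2^k"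
    and T: "(1 - 1 / 2^2^(m*s))^T \<le> \<eta>"
  shows "\<exists>V. (\<forall>(I, c)\<in>V. wildcards n m I \<and> block m I \<and> shift_ok n m I c) \<and>
    (\<forall>v\<in>V. \<forall>w\<in>V. v \<noteq> w \<longrightarrow> hj_space n m (fst v) (snd v) \<inter> hj_space n m (fst w) (snd w) = {}) \<and>
    real (card (cube n - (\<Union>(I, c)\<in>V. hj_space n m I c))) / real (card (cube n)) \<le> \<eta> \<and>
    (\<forall>(I, c)\<in>V. kdeg k m (Q \<circ> hj_emb n m I c) < d)"
proof -
  have dvd_choose: "(2::int)^k dvd int (s choose r)" if "1 \<le> r" "r \<le> 2*d" for r
    unfolding s using two_pow_dvd_choose[OF that] .
  have "0 < s" by (simp add: s)
  note cover = first_fit_cover[where T = T, OF \<open>0 < d\<close> \<open>0 < m\<close> \<open>m \<le> n\<close> this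
      wildcard_blocks_segment_family[OF S dvd_choose] wild_segment_family_disjoint[OF S(1,2)] Q]
  have "kdeg k m (Q \<circ> hj_emb n m I c) < d" if "(I, c) \<in> first_fit_spaces n m (segment_family S s m) T" for I c
    using kdeg_less[OF _ \<open>0 < d\<close>] cover(4) that by fast
  then show ?thesis
    using cover(1-3) T by (intro exI[of _ "first_fit_spaces n m (segment_family S s m) T"]) auto
qed

theorem lemma5p11:
  fixes \<eta> :: real and m k d :: nat
  assumes "\<eta> > 0" and "m > 0" and "k > 0" and "d > 0"
  shows "\<exists>n1::nat. n1 > 0 \<and> (\<forall>n\<ge>n1. \<forall>Q.
     kpoly k n Q \<and> kdeg k n Q = d \<longrightarrow>
     (\<exists>\<V> :: ((nat \<Rightarrow> nat set) \<times> (nat set \<Rightarrow> bool)) set.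
        (\<forall>(I, c)\<in>\<V>. wildcards n m I \<and> block m I \<and> shift_ok n m I c) \<and>
        (\<forall>v\<in>\<V>. \<forall>w\<in>\<V>. v \<noteq> w \<longrightarrow>
            hj_space n m (fst v) (snd v) \<inter> hj_space n m (fst w) (snd w) = {}) \<and>
        real (card (cube n - (\<Union>(I, c)\<in>\<V>. hj_space n m I c))) / real (card (cube n)) \<le> \<eta> \<and>
        (\<forall>(I, c)\<in>\<V>. kdeg k m (Q \<circ> hj_emb n m I c) < kdeg k n Q)))"
proof -
  define s :: nat where "s = 2^k * fact (2*d)"
  obtain T where T: "(1 - 1 / 2^2^(m*s)) ^ T < \<eta>"
    using real_arch_pow_inv[OF \<open>\<eta> > 0\<close>, of "1 - 1 / 2^2^(m*s)"] by auto
  obtain N where N: "\<And>(X :: nat set) coef. finite X \<Longrightarrow> N \<le> card X \<Longrightarrow>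
      \<exists>S\<subseteq>X. card S = T * (m * s) \<and> coef_order_invariant k (2*d) S coef"
    by (rule ramsey_coef_order_invariant[where M = "T * (m * s)" and k = k and r = "2*d"]) blast
  show ?thesis
  proof (intro exI[of _ "N + m"] conjI allI impI)
    fix n Q assume n: "N + m \<le> n" and Q: "kpoly k n Q \<and> kdeg k n Q = d"
    then obtain \<alpha> coef where rep: "\<And>y. y \<in> cube n \<Longrightarrow>
        Q y = (\<alpha> + (\<Sum>F\<in>{F. F \<subseteq> edges n \<and> F \<noteq> {} \<and> card F \<le> d}. coef F * monomial y F)) mod 2^k"
      using kpoly_monomial_representation by blast
    obtain S where S: "S \<subseteq> {1..n}" "card S = T * (m * s)" "coef_order_invariant k (2*d) S coef"
      using N[OF finite_atLeastAtMost[of 1 n], of coef] n by auto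
    from hj_cover_of_invariant_set[OF \<open>d > 0\<close> \<open>m > 0\<close> _ s_def S rep less_imp_le[OF T]] n Q
    show "\<exists>\<V>. (\<forall>(I, c)\<in>\<V>. wildcards n m I \<and> block m I \<and> shift_ok n m I c) \<and>
        (\<forall>v\<in>\<V>. \<forall>w\<in>\<V>. v \<noteq> w \<longrightarrow>
            hj_space n m (fst v) (snd v) \<inter> hj_space n m (fst w) (snd w) = {}) \<and>
        real (card (cube n - (\<Union>(I, c)\<in>\<V>. hj_space n m I c))) / real (card (cube n)) \<le> \<eta> \<and>
        (\<forall>(I, c)\<in>\<V>. kdeg k m (Q \<circ> hj_emb n m I c) < kdeg k n Q)"
      by simp
  qed (use \<open>m > 0\<close> in simp)
qed

end
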